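(* Let $K$ be an algebraically closed field of characteristic $0$ and let $X$ be a finite set of distinct points in $\mathbb{P}^1\times\mathbb{P}^1\times\mathbb{P}^1$ over $K$. Let $t_1=|\pi_1(X)|$ and $t_2=|\pi_2(X)|$. Then for all integers $k\ge0$, \[ H_X(t_1-1,t_2-1,k)=\sum_{m=1}^{k+1}\left(\sum_{n=m}^{\infty} r_n(X)\right). \]
   Context: Let $R=K[x_0,x_1,y_0,y_1,z_0,z_1]$ be $\mathbb{N}^3$-graded with $\deg x_i=(1,0,0)$, $\deg y_i=(0,1,0)$, $\deg z_i=(0,0,1)$. For a point $P=[a_0:a_1]\times[b_0:b_1]\times[c_0:c_1]$, $I(P)=(a_1x_0-a_0x_1,\,b_1y_0-b_0y_1,\,c_1z_0-c_0z_1)$, and for $X=\{P_1,\dots,P_s\}$, $I(X)=\bigcap_i I(P_i)$. The Hilbert function is $H_X(i,j,k)=\dim_K R_{i,j,k}-\dim_K I(X)_{i,j,k}$. $\pi_i$ is the projection to the $i$-th factor $\mathbb{P}^1$. A line of type $(1,1,0)$ is the subvariety defined by an ideal $(L,L')$ with $L\in R_{1,0,0}$, $L'\in R_{0,1,0}$ nonzero. For $i\ge1$, $r_i(X)$ is the number of lines of type $(1,1,0)$ containing exactly $i$ points of $X$ (zero for all but finitely many $i$). *)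

theory Defs
  imports "HOL-Library.Poly_Mapping" "HOL-Computational_Algebra.Polynomial"
begin

text \<open>Polynomials in the variables x0,x1,y0,y1,z0,z1, encoded as variables 0,...,5
  of the multivariate polynomial ring ((nat =>0 nat) =>0 'a) (monomial = exponent vector).\<close>

type_synonym 'a mpoly = "(nat \<Rightarrow>\<^sub>0 nat) \<Rightarrow>\<^sub>0 'a"

definition mvar :: "nat \<Rightarrow> 'a::comm_ring_1 mpoly" where
  "mvar v = Poly_Mapping.single (Poly_Mapping.single v 1) 1"

definition mconst :: "'a::comm_ring_1 \<Rightarrow> 'a mpoly" where
  "mconst c = Poly_Mapping.single 0 c"

definition mscale :: "'a::comm_ring_1 \<Rightarrow> 'a mpoly \<Rightarrow> 'a mpoly" where
  "mscale c p = Poly_Mapping.map (\<lambda>a. c * a) p"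

definition Rring :: "'a::comm_ring_1 mpoly set" where
  "Rring = {p :: 'a mpoly. \<forall>m\<in>Poly_Mapping.keys p. Poly_Mapping.keys m \<subseteq> {..<(6::nat)}}"

definition mdeg :: "(nat \<Rightarrow>\<^sub>0 nat) \<Rightarrow> nat \<times> nat \<times> nat" where
  "mdeg m = (Poly_Mapping.lookup m 0 + Poly_Mapping.lookup m 1, Poly_Mapping.lookup m 2 + Poly_Mapping.lookup m 3, Poly_Mapping.lookup m 4 + Poly_Mapping.lookup m 5)"

definition Rdeg :: "nat \<Rightarrow> nat \<Rightarrow> nat \<Rightarrow> 'a::comm_ring_1 mpoly set" where
  "Rdeg i j k = {p :: 'a mpoly. \<forall>m\<in>Poly_Mapping.keys p. Poly_Mapping.keys m \<subseteq> {..<(6::nat)} \<and> mdeg m = (i, j, k)}"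

definition pcls :: "'a::field \<times> 'a \<Rightarrow> ('a \<times> 'a) set" where
  "pcls v = {(l * fst v, l * snd v) | l. l \<noteq> 0}"

definition P1 :: "('a::field \<times> 'a) set set" where
  "P1 = {pcls v | v. v \<noteq> (0, 0)}"

type_synonym 'a pt3 = "('a \<times> 'a) set \<times> ('a \<times> 'a) set \<times> ('a \<times> 'a) set"

definition P1cube :: "'a::field pt3 set" where
  "P1cube = P1 \<times> P1 \<times> P1"

definition rep :: "('a \<times> 'a) set \<Rightarrow> 'a \<times> 'a" where
  "rep A = (SOME v. v \<in> A)"

definition ptform :: "nat \<Rightarrow> ('a::field \<times> 'a) set \<Rightarrow> 'a mpoly" where
  "ptform u A = mconst (snd (rep A)) * mvar u - mconst (fst (rep A)) * mvar (Suc u)"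

definition Ipt :: "'a::field pt3 \<Rightarrow> 'a mpoly set" where
  "Ipt P = {f * ptform 0 (fst P) + g * ptform 2 (fst (snd P)) + h * ptform 4 (snd (snd P))
            | f g h. f \<in> Rring \<and> g \<in> Rring \<and> h \<in> Rring}"

definition IX :: "'a::field pt3 set \<Rightarrow> 'a mpoly set" where
  "IX X = Rring \<inter> (\<Inter>P\<in>X. Ipt P)"

definition kdim :: "'a::field mpoly set \<Rightarrow> nat" where
  "kdim V = vector_space.dim mscale V"

definition HF :: "'a::field pt3 set \<Rightarrow> nat \<Rightarrow> nat \<Rightarrow> nat \<Rightarrow> nat" where
  "HF X i j k = kdim (Rdeg i j k :: 'a mpoly set) - kdim (IX X \<inter> Rdeg i j k)"

definition lvan :: "'a::field \<times> 'a \<Rightarrow> ('a \<times> 'a) set \<Rightarrow> bool" where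
  "lvan l A = (fst l * fst (rep A) + snd l * snd (rep A) = 0)"

definition line110 :: "'a::field \<times> 'a \<Rightarrow> 'a \<times> 'a \<Rightarrow> 'a pt3 set" where
  "line110 l m = {P \<in> P1cube. lvan l (fst P) \<and> lvan m (fst (snd P))}"

definition Lines110 :: "'a::field pt3 set set" where
  "Lines110 = {line110 l m | l m. l \<noteq> (0, 0) \<and> m \<noteq> (0, 0)}"

definition rnum :: "nat \<Rightarrow> 'a::field pt3 set \<Rightarrow> nat" where
  "rnum i X = card {L \<in> Lines110. card (X \<inter> L) = i}"

end

theory Submission
  imports Defs
begin

text \<open>Write \<open>d\<^sub>1 = |\<pi>\<^sub>1(X)| - 1\<close>, \<open>d\<^sub>2 = |\<pi>\<^sub>2(X)| - 1\<close> and \<open>V = R(d\<^sub>1, d\<^sub>2, k)\<close>.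
  For a line \<open>q = {A} \<times> {B} \<times> \<P>\<^sup>1\<close> of type \<open>(1,1,0)\<close> meeting \<open>X\<close> in the points
  \<open>C\<^sub>0, \<dots>, C\<^sub>n\<^sub>-\<^sub>1\<close>, consider the forms \<open>e\<^sub>A(x) e\<^sub>B(y) N\<^sub>r(z)\<close> for \<open>r < min n (k + 1)\<close>, where
  \<open>e\<^sub>A\<close> is the product of the linear forms of the points of \<open>\<pi>\<^sub>1(X) - {A}\<close> (similarly \<open>e\<^sub>B\<close>) and
  \<open>N\<^sub>r = L(C\<^sub>0) \<cdots> L(C\<^sub>r\<^sub>-\<^sub>1) z\<^sup>k\<^sup>-\<^sup>r\<close> is a Newton basis for the points \<open>C\<^sub>i\<close>.
  These forms are a basis of \<open>V\<close> modulo \<open>I(X) \<inter> V\<close>. They span: the binary forms of degree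
  \<open>d\<^sub>1\<close> (resp. \<open>d\<^sub>2\<close>) are spanned by the \<open>e\<^sub>A\<close> (resp. \<open>e\<^sub>B\<close>), \<open>e\<^sub>A e\<^sub>B\<close> lies in \<open>I(X)\<close> unless the line
  over \<open>(A, B)\<close> meets \<open>X\<close>, and a form of degree \<open>k\<close> in \<open>z\<close> is a combination of the \<open>N\<^sub>r\<close> plus a
  multiple of \<open>L(C\<^sub>0) \<cdots> L(C\<^sub>n\<^sub>-\<^sub>1)\<close>. They are independent modulo \<open>I(X)\<close>: evaluating at the
  points \<open>(A, B, C\<^sub>i)\<close> gives a triangular system. Hence \<open>H\<^sub>X(d\<^sub>1, d\<^sub>2, k) = \<Sum>\<^sub>q min |X \<inter> q| (k + 1)\<close>,
  and grouping the lines by the number of points they contain gives the right-hand side.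
  The argument works over any field.\<close>

lemma mscale_eq_mconst_mult: "mscale c p = mconst c * p"
  unfolding mscale_def mconst_def by (rule mult_map_scale_conv_mult)

lemma mconst_add: "mconst (a + b) = mconst a + mconst b"
  unfolding mconst_def by (simp add: single_add)

lemma mconst_mult: "mconst (a * b) = mconst a * mconst b"
  unfolding mconst_def by (simp add: mult_single)

lemma mconst_one [simp]: "mconst 1 = 1"
  unfolding mconst_def by simp

lemma mconst_zero [simp]: "mconst 0 = 0"
  unfolding mconst_def by simp

lemma mconst_uminus: "mconst (- a) = - mconst a"
  unfolding mconst_def by (simp add: single_uminus)

lemma mconst_diff: "mconst (a - b) = mconst a - mconst b"
  unfolding mconst_def by (simp add: single_diff)

lemma mconst_power: "mconst (a ^ n) = mconst a ^ n"
  by (induction n) (simp_all add: mconst_mult)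

interpretation MV: vector_space "mscale :: 'a::field \<Rightarrow> 'a mpoly \<Rightarrow> 'a mpoly"
  by unfold_locales (simp_all add: mscale_eq_mconst_mult mconst_add mconst_mult algebra_simps)

lemma subspace_mult_span:
  assumes SP: "MV.subspace SP" and x: "x \<in> MV.span E" and E: "\<And>e. e \<in> E \<Longrightarrow> e * q \<in> SP"
  shows "x * q \<in> SP"
  using x
proof (induction rule: MV.span_induct_alt)
  case base
  then show ?case using MV.subspace_0[OF SP] by simp
next
  case (step c x y)
  have "mscale c x * q + y * q = mscale c (x * q) + y * q"
    by (simp add: mscale_eq_mconst_mult algebra_simps)
  moreover have "mscale c (x * q) \<in> SP" using E step MV.subspace_scale[OF SP] by blast
  ultimately show ?case using step MV.subspace_add[OF SP] by (simp add: distrib_right)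
qed

definition monomial_eval :: "(nat \<Rightarrow> 'a::comm_ring_1) \<Rightarrow> (nat \<Rightarrow>\<^sub>0 nat) \<Rightarrow> 'a" where
  "monomial_eval v m = (\<Prod>i<6. v i ^ Poly_Mapping.lookup m i)"

definition meval :: "(nat \<Rightarrow> 'a::comm_ring_1) \<Rightarrow> 'a mpoly \<Rightarrow> 'a" where
  "meval v p = (\<Sum>m\<in>Poly_Mapping.keys p. Poly_Mapping.lookup p m * monomial_eval v m)"

lemma monomial_eval_add: "monomial_eval v (m + n) = monomial_eval v m * monomial_eval v n"
  unfolding monomial_eval_def by (simp add: lookup_add power_add prod.distrib)

lemma meval_superset:
  "finite M \<Longrightarrow> Poly_Mapping.keys p \<subseteq> M \<Longrightarrow>
    meval v p = (\<Sum>m\<in>M. Poly_Mapping.lookup p m * monomial_eval v m)"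
  unfolding meval_def by (rule sum.mono_neutral_left) (auto simp: in_keys_iff)

lemma meval_add: "meval v (p + q) = meval v p + meval v q"
proof -
  let ?M = "Poly_Mapping.keys p \<union> Poly_Mapping.keys q"
  have "meval v (p + q) = (\<Sum>m\<in>?M. Poly_Mapping.lookup (p + q) m * monomial_eval v m)"
    by (rule meval_superset) (auto dest: subsetD[OF keys_add])
  also have "\<dots> = (\<Sum>m\<in>?M. Poly_Mapping.lookup p m * monomial_eval v m)
      + (\<Sum>m\<in>?M. Poly_Mapping.lookup q m * monomial_eval v m)"
    by (simp add: lookup_add distrib_right sum.distrib)
  also have "\<dots> = meval v p + meval v q"
    by (subst (1 2) meval_superset[of ?M]) auto
  finally show ?thesis .
qed

lemma meval_zero [simp]: "meval v 0 = 0"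
  unfolding meval_def by simp

lemma meval_uminus: "meval v (- p) = - meval v p"
  unfolding meval_def by (simp add: sum_negf)

lemma meval_diff: "meval v (p - q) = meval v p - meval v q"
  using meval_add[of v p "- q"] by (simp add: meval_uminus)

lemma meval_sum: "meval v (sum f A) = (\<Sum>a\<in>A. meval v (f a))"
  by (induction A rule: infinite_finite_induct) (auto simp: meval_add)

lemma meval_single: "meval v (Poly_Mapping.single m c) = c * monomial_eval v m"
  unfolding meval_def by simp

lemma sum_single_lookup: "p = (\<Sum>m\<in>Poly_Mapping.keys p. Poly_Mapping.single m (Poly_Mapping.lookup p m))"
  by (rule poly_mapping_eqI)
     (auto simp: lookup_sum lookup_single when_def in_keys_iff intro: sum.neutral
       simp add: sum.delta[of "Poly_Mapping.keys p", simplified])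

lemma meval_mult: "meval v (p * q) = meval v p * meval v q"
proof -
  have "p * q = (\<Sum>m\<in>Poly_Mapping.keys p. \<Sum>n\<in>Poly_Mapping.keys q.
      Poly_Mapping.single m (Poly_Mapping.lookup p m) * Poly_Mapping.single n (Poly_Mapping.lookup q n))"
    by (subst (1) sum_single_lookup[of p], subst (1) sum_single_lookup[of q]) (simp add: sum_product)
  then have "meval v (p * q) = (\<Sum>m\<in>Poly_Mapping.keys p. \<Sum>n\<in>Poly_Mapping.keys q.
       Poly_Mapping.lookup p m * monomial_eval v m * (Poly_Mapping.lookup q n * monomial_eval v n))"
    by (simp add: meval_sum mult_single meval_single monomial_eval_add mult_ac)
  also have "\<dots> = meval v p * meval v q"
    unfolding meval_def by (simp add: sum_product)
  finally show ?thesis .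
qed

lemma meval_mconst [simp]: "meval v (mconst c) = c"
  unfolding mconst_def meval_single monomial_eval_def by simp

lemma meval_mvar [simp]:
  assumes "u < 6" shows "meval v (mvar u) = v u"
proof -
  have "(\<Prod>i<6. v i ^ (if u = i then Suc 0 else 0)) = (\<Prod>i<6. if u = i then v i else 1)"
    by (rule prod.cong) auto
  also have "\<dots> = v u" using assms by (simp add: prod.delta')
  finally show ?thesis
    unfolding mvar_def meval_single monomial_eval_def by (simp add: lookup_single when_def)
qed

lemma meval_power: "meval v (p ^ n) = meval v p ^ n"
  by (induction n) (simp_all add: meval_mult flip: mconst_one)

lemma meval_prod: "meval v (prod f A) = (\<Prod>a\<in>A. meval v (f a))"
  by (induction A rule: infinite_finite_induct) (auto simp: meval_mult simp flip: mconst_one)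

lemma meval_prod_list: "meval v (prod_list (map f xs)) = prod_list (map (\<lambda>x. meval v (f x)) xs)"
  by (induction xs) (auto simp: meval_mult simp flip: mconst_one)


lemma keys_add_nat:
  "Poly_Mapping.keys ((a::nat \<Rightarrow>\<^sub>0 nat) + b) = Poly_Mapping.keys a \<union> Poly_Mapping.keys b"
  by (auto simp: in_keys_iff lookup_add)

lemma mdeg_add:
  "mdeg (a + b) = (fst (mdeg a) + fst (mdeg b), fst (snd (mdeg a)) + fst (snd (mdeg b)),
     snd (snd (mdeg a)) + snd (snd (mdeg b)))"
  unfolding mdeg_def by (simp add: lookup_add)

lemma Rdeg_zero: "0 \<in> Rdeg i j k"
  unfolding Rdeg_def by simp

lemma Rdeg_add: "p \<in> Rdeg i j k \<Longrightarrow> q \<in> Rdeg i j k \<Longrightarrow> p + q \<in> Rdeg i j k"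
  unfolding Rdeg_def using keys_add[of p q] by blast

lemma Rdeg_mconst_mult: "p \<in> Rdeg i j k \<Longrightarrow> mconst c * p \<in> Rdeg i j k"
  using keys_mult[of "mconst c" p] unfolding Rdeg_def mconst_def by (fastforce split: if_splits)

lemma Rdeg_mult:
  assumes "p \<in> Rdeg i j k" "q \<in> Rdeg i' j' k'"
  shows "p * q \<in> Rdeg (i + i') (j + j') (k + k')"
  unfolding Rdeg_def
proof (intro CollectI ballI conjI)
  fix m assume "m \<in> Poly_Mapping.keys (p * q)"
  then obtain a b where ab: "m = a + b" "a \<in> Poly_Mapping.keys p" "b \<in> Poly_Mapping.keys q"
    using keys_mult[of p q] by blast
  show "Poly_Mapping.keys m \<subseteq> {..<6}" using assms ab unfolding Rdeg_def by (auto simp: keys_add_nat)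
  show "mdeg m = (i + i', j + j', k + k')" using assms ab unfolding Rdeg_def by (auto simp: mdeg_add)
qed

lemma Rdeg_one: "1 \<in> Rdeg 0 0 0"
  unfolding Rdeg_def mdeg_def by simp

lemma Rdeg_power: "p \<in> Rdeg i j k \<Longrightarrow> p ^ n \<in> Rdeg (n * i) (n * j) (n * k)"
  by (induction n) (auto simp: Rdeg_one dest: Rdeg_mult)

lemma Rdeg_mvar:
  "mvar 0 \<in> Rdeg 1 0 0" "mvar (Suc 0) \<in> Rdeg 1 0 0" "mvar 2 \<in> Rdeg 0 1 0"
  "mvar (Suc 2) \<in> Rdeg 0 1 0" "mvar 4 \<in> Rdeg 0 0 1" "mvar (Suc 4) \<in> Rdeg 0 0 1"
  unfolding Rdeg_def mvar_def mdeg_def by (simp_all add: lookup_single)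

lemma Rdeg_subset_Rring: "Rdeg i j k \<subseteq> Rring"
  unfolding Rdeg_def Rring_def by auto

lemma Rring_zero: "0 \<in> Rring"
  unfolding Rring_def by simp

lemma Rring_mconst: "mconst c \<in> Rring"
  unfolding Rring_def mconst_def by simp

lemma Rring_add: "p \<in> Rring \<Longrightarrow> q \<in> Rring \<Longrightarrow> p + q \<in> Rring"
  unfolding Rring_def using keys_add[of p q] by blast

lemma Rring_mult: "p \<in> Rring \<Longrightarrow> q \<in> Rring \<Longrightarrow> p * q \<in> Rring"
  unfolding Rring_def using keys_mult[of p q] by (fastforce simp: keys_add_nat)

lemma Rring_one: "1 \<in> Rring"
  using Rdeg_one Rdeg_subset_Rring by blast

lemma Rring_prod: "(\<And>a. a \<in> A \<Longrightarrow> f a \<in> Rring) \<Longrightarrow> prod f A \<in> Rring"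
  by (induction A rule: infinite_finite_induct) (auto intro: Rring_mult Rring_one)

lemma Ipt_add:
  assumes "p \<in> Ipt P" "q \<in> Ipt P" shows "p + q \<in> Ipt P"
proof -
  obtain f g h f' g' h' where fgh: "f \<in> Rring" "g \<in> Rring" "h \<in> Rring"
    "f' \<in> Rring" "g' \<in> Rring" "h' \<in> Rring"
    and "p = f * ptform 0 (fst P) + g * ptform 2 (fst (snd P)) + h * ptform 4 (snd (snd P))"
    and "q = f' * ptform 0 (fst P) + g' * ptform 2 (fst (snd P)) + h' * ptform 4 (snd (snd P))"
    using assms unfolding Ipt_def by blast
  then have "p + q = (f + f') * ptform 0 (fst P) + (g + g') * ptform 2 (fst (snd P))
      + (h + h') * ptform 4 (snd (snd P))"
    by (simp add: algebra_simps)
  then show ?thesis unfolding Ipt_def using fgh by (blast intro: Rring_add)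
qed

lemma Ipt_mult:
  assumes "p \<in> Ipt P" "r \<in> Rring" shows "r * p \<in> Ipt P"
proof -
  obtain f g h where fgh: "f \<in> Rring" "g \<in> Rring" "h \<in> Rring"
    and "p = f * ptform 0 (fst P) + g * ptform 2 (fst (snd P)) + h * ptform 4 (snd (snd P))"
    using assms unfolding Ipt_def by blast
  then have "r * p = (r * f) * ptform 0 (fst P) + (r * g) * ptform 2 (fst (snd P))
      + (r * h) * ptform 4 (snd (snd P))"
    by (simp add: algebra_simps)
  then show ?thesis unfolding Ipt_def using fgh assms(2) by (blast intro: Rring_mult)
qed

lemma Ipt_generators:
  assumes "r \<in> Rring"
  shows "r * ptform 0 (fst P) \<in> Ipt P" "r * ptform 2 (fst (snd P)) \<in> Ipt P"
    "r * ptform 4 (snd (snd P)) \<in> Ipt P"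
  unfolding Ipt_def using assms Rring_zero by force+

lemma MV_subspace_IX_Rdeg: "MV.subspace (IX X \<inter> Rdeg i j k)"
  using Ipt_generators(1)[OF Rring_zero] Rdeg_zero Rring_zero
  unfolding MV.subspace_def IX_def
  by (auto simp: mscale_eq_mconst_mult Ipt_add Ipt_mult Rring_add Rring_mult Rring_mconst
      Rdeg_add Rdeg_mconst_mult)

definition monomial3 :: "nat \<Rightarrow> nat \<Rightarrow> nat \<Rightarrow> nat \<Rightarrow> nat \<Rightarrow> nat \<Rightarrow> 'a::comm_ring_1 mpoly" where
  "monomial3 i j k a b c = (mvar 0 ^ a * mvar 1 ^ (i - a)) * (mvar 2 ^ b * mvar 3 ^ (j - b))
     * (mvar 4 ^ c * mvar 5 ^ (k - c))"

lemma mvar_power: "mvar u ^ e = Poly_Mapping.single (Poly_Mapping.single u e) 1"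
  unfolding mvar_def by (induction e) (simp_all add: mult_single single_add[symmetric] add.commute)

lemma single_eq_monomial3:
  assumes keys: "Poly_Mapping.keys m \<subseteq> {..<6}" and deg: "mdeg m = (i, j, k)"
  shows "Poly_Mapping.single m c = mconst c *
    monomial3 i j k (Poly_Mapping.lookup m 0) (Poly_Mapping.lookup m 2) (Poly_Mapping.lookup m 4)"
proof -
  let ?e = "Poly_Mapping.lookup m"
  have "m = Poly_Mapping.single 0 (?e 0) + Poly_Mapping.single 1 (?e 1)
     + (Poly_Mapping.single 2 (?e 2) + Poly_Mapping.single 3 (?e 3))
     + (Poly_Mapping.single 4 (?e 4) + Poly_Mapping.single 5 (?e 5))"
  proof (rule poly_mapping_eqI)
    fix v
    show "?e v = Poly_Mapping.lookup (Poly_Mapping.single 0 (?e 0) + Poly_Mapping.single 1 (?e 1)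
     + (Poly_Mapping.single 2 (?e 2) + Poly_Mapping.single 3 (?e 3))
     + (Poly_Mapping.single 4 (?e 4) + Poly_Mapping.single 5 (?e 5))) v"
    proof (cases "v < 6")
      case True
      then have "v = 0 \<or> v = 1 \<or> v = 2 \<or> v = 3 \<or> v = 4 \<or> v = 5" by auto
      then show ?thesis by (auto simp: lookup_add lookup_single)
    next
      case False
      then have "?e v = 0" using keys by (auto simp: in_keys_iff)
      then show ?thesis using False by (auto simp: lookup_add lookup_single)
    qed
  qed
  moreover have "i - ?e 0 = ?e 1" "j - ?e 2 = ?e 3" "k - ?e 4 = ?e 5"
    using deg unfolding mdeg_def by auto
  ultimately show ?thesis
    unfolding monomial3_def mvar_power mconst_def by (simp add: mult_single)
qed

lemma Rdeg_subset_span_monomial3: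
  "(Rdeg i j k :: 'a::field mpoly set)
     \<subseteq> MV.span ((\<lambda>(a, b, c). monomial3 i j k a b c) ` ({..i} \<times> {..j} \<times> {..k}))"
proof
  fix p :: "'a mpoly" assume p: "p \<in> Rdeg i j k"
  let ?M = "(\<lambda>(a, b, c). monomial3 i j k a b c) ` ({..i} \<times> {..j} \<times> {..k}) :: 'a mpoly set"
  have "Poly_Mapping.single m (Poly_Mapping.lookup p m) \<in> MV.span ?M"
    if m: "m \<in> Poly_Mapping.keys p" for m
  proof -
    have keys: "Poly_Mapping.keys m \<subseteq> {..<6}" and deg: "mdeg m = (i, j, k)"
      using p m unfolding Rdeg_def by auto
    then have "monomial3 i j k (Poly_Mapping.lookup m 0) (Poly_Mapping.lookup m 2)
        (Poly_Mapping.lookup m 4) \<in> ?M"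
      unfolding mdeg_def by (intro image_eqI[of _ _ "(Poly_Mapping.lookup m 0,
          Poly_Mapping.lookup m 2, Poly_Mapping.lookup m 4)"]) auto
    then show ?thesis
      unfolding single_eq_monomial3[OF keys deg] mscale_eq_mconst_mult[symmetric]
      by (intro MV.span_scale MV.span_base)
  qed
  then show "p \<in> MV.span ?M"
    by (subst sum_single_lookup) (rule MV.span_sum)
qed

subsection \<open>Binary forms\<close>

text \<open>Forms of degree \<open>d\<close> in the two variables \<open>u\<close>, \<open>u + 1\<close> of one factor \<open>\<P>\<^sup>1\<close>
  (\<open>u \<in> {0, 2, 4}\<close>).\<close>

inductive binform :: "nat \<Rightarrow> nat \<Rightarrow> 'a::comm_ring_1 mpoly \<Rightarrow> bool" for u where
  binform_zero: "binform u d 0"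
| binform_monomial: "p + q = d \<Longrightarrow> binform u d (mvar u ^ p * mvar (Suc u) ^ q)"
| binform_add: "binform u d f \<Longrightarrow> binform u d g \<Longrightarrow> binform u d (f + g)"
| binform_scale: "binform u d f \<Longrightarrow> binform u d (mconst c * f)"

lemma binform_uminus: "binform u d f \<Longrightarrow> binform u d (- f)"
  using binform_scale[of u d f "- 1"] by (simp add: mconst_uminus)

lemma binform_diff: "binform u d f \<Longrightarrow> binform u d g \<Longrightarrow> binform u d (f - g)"
  by (metis binform_uminus binform_add diff_conv_add_uminus)

lemma binform_sum: "(\<And>a. a \<in> A \<Longrightarrow> binform u d (f a)) \<Longrightarrow> binform u d (sum f A)"
  by (induction A rule: infinite_finite_induct) (auto intro: binform_add binform_zero)

lemma binform_one: "binform u 0 1"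
  using binform_monomial[of 0 0 0 u] by simp

lemma binform_mvar: "binform u 1 (mvar u)" "binform u 1 (mvar (Suc u))"
  using binform_monomial[of 1 0 1 u] binform_monomial[of 0 1 1 u] by simp_all

lemma binform_monomial_mult:
  "binform u e g \<Longrightarrow> binform u (p + q + e) (mvar u ^ p * mvar (Suc u) ^ q * g)"
proof (induction rule: binform.induct)
  case (binform_zero d)
  then show ?case by (simp add: binform.binform_zero)
next
  case (binform_monomial p' q' d)
  have "mvar u ^ p * mvar (Suc u) ^ q * (mvar u ^ p' * mvar (Suc u) ^ q')
      = (mvar u ^ (p + p') * mvar (Suc u) ^ (q + q') :: 'a mpoly)"
    by (simp add: power_add algebra_simps)
  then show ?case using binform_monomial by (auto intro: binform.binform_monomial)
next
  case (binform_add d f g)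
  then show ?case by (simp add: distrib_left binform.binform_add)
next
  case (binform_scale d f c)
  then show ?case by (metis binform.binform_scale mult.left_commute)
qed

lemma binform_mult: "binform u d f \<Longrightarrow> binform u e g \<Longrightarrow> binform u (d + e) (f * g)"
proof (induction rule: binform.induct)
  case (binform_zero d)
  then show ?case by (simp add: binform.binform_zero)
next
  case (binform_monomial p q d)
  then show ?case using binform_monomial_mult by blast
next
  case (binform_add d f1 f2)
  then show ?case by (simp add: distrib_right binform.binform_add)
next
  case (binform_scale d f c)
  then show ?case by (metis binform.binform_scale mult.assoc)
qed

lemma binform_power: "binform u d f \<Longrightarrow> binform u (n * d) (f ^ n)"
  by (induction n) (auto simp: binform_one dest: binform_mult)

lemma binform_prod: "finite A \<Longrightarrow> (\<And>a. a \<in> A \<Longrightarrow> binform u 1 (f a)) \<Longrightarrow> binform u (card A) (prod f A)"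
  by (induction A rule: finite_induct) (auto simp: binform_one intro: binform_mult[of u 1, simplified])

lemma binform_prod_list:
  "(\<And>a. a \<in> set xs \<Longrightarrow> binform u 1 (f a)) \<Longrightarrow> binform u (length xs) (prod_list (map f xs))"
  by (induction xs) (auto simp: binform_one intro: binform_mult[of u 1, simplified])

lemma binform_degree_0_mconst:
  assumes "binform u 0 g" shows "\<exists>c. g = mconst c"
proof -
  have "binform u d g \<Longrightarrow> d = 0 \<Longrightarrow> \<exists>c. g = mconst c" for d
  proof (induction rule: binform.induct)
    case (binform_zero d)
    then show ?case by (metis mconst_zero)
  next
    case (binform_monomial p q d)
    then show ?case by (metis mconst_one add_is_0 power_0 mult_1)
  next
    case (binform_add d f g)
    then show ?case by (metis mconst_add)
  next
    case (binform_scale d f c)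
    then show ?case by (metis mconst_mult)
  qed
  then show ?thesis using assms by blast
qed

lemma binform_Rdeg:
  fixes g :: "'a::comm_ring_1 mpoly"
  assumes "(mvar u :: 'a mpoly) \<in> Rdeg i j k" "(mvar (Suc u) :: 'a mpoly) \<in> Rdeg i j k"
  shows "binform u d g \<Longrightarrow> g \<in> Rdeg (d * i) (d * j) (d * k)"
proof (induction rule: binform.induct)
  case (binform_monomial p q d)
  have "(mvar u ^ p * mvar (Suc u) ^ q :: 'a mpoly) \<in> Rdeg ((p + q) * i) ((p + q) * j) ((p + q) * k)"
    using Rdeg_mult[OF Rdeg_power[OF assms(1), of p] Rdeg_power[OF assms(2), of q]]
    by (simp add: add_mult_distrib)
  then show ?case using binform_monomial by simp
qed (simp_all add: Rdeg_zero Rdeg_add Rdeg_mconst_mult)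

lemma binform_Rdeg_factors:
  "binform 0 d f \<Longrightarrow> f \<in> Rdeg d 0 0" "binform 2 d f \<Longrightarrow> f \<in> Rdeg 0 d 0"
  "binform 4 d f \<Longrightarrow> f \<in> Rdeg 0 0 d"
  using binform_Rdeg[OF Rdeg_mvar(1,2)] binform_Rdeg[OF Rdeg_mvar(3,4)]
    binform_Rdeg[OF Rdeg_mvar(5,6)] by simp_all

lemma binform_monomial3_factors:
  assumes "a \<le> i" "b \<le> j" "c \<le> k"
  shows "binform 0 i (mvar 0 ^ a * mvar 1 ^ (i - a))" "binform 2 j (mvar 2 ^ b * mvar 3 ^ (j - b))"
    "binform 4 k (mvar 4 ^ c * mvar 5 ^ (k - c))"
  using binform_monomial[of a "i - a" i 0] binform_monomial[of b "j - b" j 2]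
    binform_monomial[of c "k - c" k 4] assms
  by (simp_all add: numeral_eq_Suc)

lemma binform_Rring:
  fixes g :: "'a::comm_ring_1 mpoly"
  shows "binform u d g \<Longrightarrow> u < 5 \<Longrightarrow> g \<in> Rring"
proof (induction rule: binform.induct)
  case (binform_monomial p q d)
  have "(mvar v :: 'a mpoly) \<in> Rring" if "v < 6" for v
    using that unfolding Rring_def mvar_def by simp
  then have "(mvar v ^ n :: 'a mpoly) \<in> Rring" if "v < 6" for v n
    using that by (induction n) (auto intro: Rring_mult Rring_one)
  then show ?case using binform_monomial.prems by (simp add: Rring_mult)
qed (auto intro: Rring_zero Rring_add Rring_mult Rring_mconst)

lemma binform_meval_cong:
  assumes "u < 5" "v u = v' u" "v (Suc u) = v' (Suc u)"
  shows "binform u d g \<Longrightarrow> meval v g = meval v' g"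
  by (induction rule: binform.induct) (use assms in \<open>auto simp: meval_add meval_mult meval_power\<close>)

lemma pcls_P1: "v \<noteq> (0, 0) \<Longrightarrow> pcls v \<in> P1"
  unfolding P1_def by blast

lemma pcls_eq_if_mem:
  assumes "w \<in> pcls v" shows "pcls w = pcls v"
proof -
  obtain l where l: "l \<noteq> 0" "w = (l * fst v, l * snd v)" using assms unfolding pcls_def by auto
  show ?thesis
  proof
    show "pcls w \<subseteq> pcls v"
    proof
      fix x assume "x \<in> pcls w"
      then obtain m where m: "m \<noteq> 0" "x = (m * fst w, m * snd w)" unfolding pcls_def by auto
      then have "x = ((m * l) * fst v, (m * l) * snd v)" using l by simp
      then show "x \<in> pcls v" unfolding pcls_def using m l by auto
    qed
    show "pcls v \<subseteq> pcls w"
    proof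
      fix x assume "x \<in> pcls v"
      then obtain m where m: "m \<noteq> 0" "x = (m * fst v, m * snd v)" unfolding pcls_def by auto
      then have "x = ((m / l) * fst w, (m / l) * snd w)" using l by (simp add: field_simps)
      moreover have "m / l \<noteq> 0" using m l by simp
      ultimately show "x \<in> pcls w" unfolding pcls_def by blast
    qed
  qed
qed

lemma P1_rep:
  assumes "A \<in> P1"
  shows "rep A \<in> A" "rep A \<noteq> (0, 0)" "A = pcls (rep A)"
proof -
  obtain v where v: "v \<noteq> (0, 0)" "A = pcls v" using assms unfolding P1_def by auto
  have "(fst v, snd v) \<in> A" unfolding v pcls_def by (auto intro!: exI[of _ 1])
  then show r: "rep A \<in> A" unfolding rep_def by (rule someI)
  then obtain l where "l \<noteq> 0" "rep A = (l * fst v, l * snd v)" unfolding v pcls_def by auto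
  then show "rep A \<noteq> (0, 0)" using v by (cases v) auto
  show "A = pcls (rep A)" using pcls_eq_if_mem[of "rep A" v] r v by simp
qed

lemma P1_eq_if_cross_zero:
  assumes A: "A \<in> P1" and B: "B \<in> P1"
    and cross: "snd (rep B) * fst (rep A) - fst (rep B) * snd (rep A) = 0"
  shows "A = B"
proof -
  obtain a0 a1 where a: "rep A = (a0, a1)" by fastforce
  obtain b0 b1 where b: "rep B = (b0, b1)" by fastforce
  have an: "(a0, a1) \<noteq> (0, 0)" and bn: "(b0, b1) \<noteq> (0, 0)" using P1_rep A B a b by metis+
  have ab: "b1 * a0 = b0 * a1" using cross a b by simp
  have "(b0, b1) \<in> pcls (a0, a1)"
  proof (cases "a0 = 0")
    case False
    then have "b0 \<noteq> 0" using ab bn by auto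
    then show ?thesis unfolding pcls_def using False ab
      by (intro CollectI exI[of _ "b0 / a0"]) (auto simp: field_simps)
  next
    case True
    then have "a1 \<noteq> 0" "b0 = 0" using an ab by auto
    then show ?thesis unfolding pcls_def using True bn
      by (intro CollectI exI[of _ "b1 / a1"]) (auto simp: field_simps)
  qed
  then have "pcls (b0, b1) = pcls (a0, a1)" by (rule pcls_eq_if_mem)
  then show ?thesis using P1_rep(3)[OF A] P1_rep(3)[OF B] a b by simp
qed

text \<open>Meaningful only at the variables \<open>u\<close>, \<open>u + 1\<close>, which is all that binary forms see.\<close>

definition point_val :: "nat \<Rightarrow> ('a \<times> 'a) set \<Rightarrow> nat \<Rightarrow> 'a" where
  "point_val u A = (\<lambda>i. if i = u then fst (rep A) else snd (rep A))"

lemma binform_ptform: "binform u 1 (ptform u A)"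
  unfolding ptform_def using binform_mvar by (blast intro: binform_diff binform_scale)

lemma meval_point_val_ptform_eq_0_iff:
  assumes "u < 5" "A \<in> P1" "B \<in> P1"
  shows "meval (point_val u A) (ptform u B :: 'a::field mpoly) = 0 \<longleftrightarrow> A = B"
proof -
  have "meval (point_val u A) (ptform u B :: 'a mpoly)
      = snd (rep B) * fst (rep A) - fst (rep B) * snd (rep A)"
    using assms(1) unfolding ptform_def point_val_def by (simp add: meval_diff meval_mult)
  then show ?thesis using P1_eq_if_cross_zero[OF assms(2,3)] by (auto simp: mult.commute)
qed

subsection \<open>Division of binary forms by linear forms\<close>

definition pivot_var :: "nat \<Rightarrow> ('a::field \<times> 'a) set \<Rightarrow> 'a mpoly" where
  "pivot_var u A = (if fst (rep A) \<noteq> 0 then mvar u else mvar (Suc u))"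

lemma binform_pivot_var:
  fixes A :: "('a::field \<times> 'a) set"
  shows "binform u 1 (pivot_var u A)"
  unfolding pivot_var_def by (simp add: binform_mvar[simplified])

lemma meval_point_val_pivot_var:
  "u < 5 \<Longrightarrow> A \<in> P1 \<Longrightarrow> meval (point_val u A) (pivot_var u A) \<noteq> 0"
  using P1_rep(2)[of A] unfolding pivot_var_def point_val_def by (cases "rep A") auto

lemma monomial_mod_linear:
  fixes v w L :: "'a::comm_ring_1 mpoly"
  assumes v: "binform u 1 v" and w: "binform u 1 w" and wv: "w = mconst \<alpha> * v + mconst \<beta> * L"
  shows "\<exists>h. binform u (p + q - 1) h \<and> v ^ p * w ^ q = mconst (\<alpha> ^ q) * v ^ (p + q) + L * h"
proof -
  define s where "s = (\<Sum>i<q. (mconst \<alpha> * v) ^ (q - Suc i) * w ^ i)"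
  have "w ^ q = (mconst \<alpha> * v) ^ q + mconst \<beta> * L * s"
    using power_diff_sumr2[of w q "mconst \<alpha> * v"] wv unfolding s_def by (simp add: algebra_simps)
  then have "v ^ p * w ^ q = v ^ p * (mconst \<alpha> * v) ^ q + L * (mconst \<beta> * (v ^ p * s))"
    by (simp add: algebra_simps)
  also have "v ^ p * (mconst \<alpha> * v) ^ q = mconst (\<alpha> ^ q) * v ^ (p + q)"
    by (simp add: power_mult_distrib power_add mconst_power mult_ac)
  finally have "v ^ p * w ^ q = mconst (\<alpha> ^ q) * v ^ (p + q) + L * (mconst \<beta> * (v ^ p * s))" .
  moreover have "binform u (p + q - 1) (mconst \<beta> * (v ^ p * s))"
  proof -
    have "binform u (p + q - 1) (v ^ p * ((mconst \<alpha> * v) ^ (q - Suc i) * w ^ i))" if "i < q" for i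
    proof -
      have "binform u (p * 1 + ((q - Suc i) * 1 + i * 1)) (v ^ p * ((mconst \<alpha> * v) ^ (q - Suc i) * w ^ i))"
        by (intro binform_mult binform_power binform_scale v w)
      moreover have "p * 1 + ((q - Suc i) * 1 + i * 1) = p + q - 1" using that by simp
      ultimately show ?thesis by simp
    qed
    then show ?thesis
      unfolding s_def sum_distrib_left by (intro binform_scale binform_sum) auto
  qed
  ultimately show ?thesis by blast
qed

lemma mconst_solve_linear:
  fixes x y :: "'a::field mpoly"
  assumes "c \<noteq> 0"
  shows "y = mconst (a / c) * x - mconst (1 / c) * (mconst a * x - mconst c * y)"
proof -
  have "mconst (a / c) * x - mconst (1 / c) * (mconst a * x - mconst c * y)
      = (mconst (a / c) - mconst (1 / c) * mconst a) * x + (mconst (1 / c) * mconst c) * y"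
    by (simp add: algebra_simps)
  also have "\<dots> = y" using assms by (simp flip: mconst_mult mconst_diff)
  finally show ?thesis by simp
qed

lemma monomial_mod_ptform:
  fixes A :: "('a::field \<times> 'a) set"
  assumes A: "A \<in> P1"
  shows "\<exists>c h. binform u (p + q - 1) h
    \<and> mvar u ^ p * mvar (Suc u) ^ q = mconst c * pivot_var u A ^ (p + q) + ptform u A * h"
proof -
  obtain a0 a1 where a: "rep A = (a0, a1)" by fastforce
  have L: "ptform u A = mconst a1 * mvar u - mconst a0 * mvar (Suc u)"
    unfolding ptform_def a by simp
  show ?thesis
  proof (cases "a0 = 0")
    case False
    then have "mvar (Suc u) = mconst (a1 / a0) * mvar u + mconst (- 1 / a0) * ptform u A"
      using mconst_solve_linear[OF False, of "mvar (Suc u)" a1 "mvar u"]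
      unfolding L by (simp add: mconst_uminus)
    then obtain h where "binform u (p + q - 1) h"
      "mvar u ^ p * mvar (Suc u) ^ q = mconst ((a1 / a0) ^ q) * mvar u ^ (p + q) + ptform u A * h"
      using monomial_mod_linear[OF binform_mvar] by blast
    then show ?thesis using False unfolding pivot_var_def a by auto
  next
    case True
    then have "a1 \<noteq> 0" using P1_rep(2)[OF A] a by simp
    then have "mvar u = mconst (a0 / a1) * mvar (Suc u) + mconst (1 / a1) * ptform u A"
      using mconst_solve_linear[of a1 "mvar u" a0 "mvar (Suc u)"] unfolding L
      by (simp add: algebra_simps)
    then have "\<exists>h. binform u (q + p - 1) h \<and> mvar (Suc u) ^ q * mvar u ^ p
        = mconst ((a0 / a1) ^ p) * mvar (Suc u) ^ (q + p) + ptform u A * h"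
      using monomial_mod_linear[OF binform_mvar(2,1)] by blast
    then show ?thesis using True unfolding pivot_var_def a by (auto simp: ac_simps)
  qed
qed

lemma binform_mod_ptform:
  fixes A :: "('a::field \<times> 'a) set"
  assumes A: "A \<in> P1"
  shows "binform u d g \<Longrightarrow> \<exists>c h. binform u (d - 1) h \<and> g = mconst c * pivot_var u A ^ d + ptform u A * h"
proof (induction rule: binform.induct)
  case (binform_zero d)
  then show ?case by (metis binform.binform_zero mconst_zero mult_zero_left mult_zero_right add_0)
next
  case (binform_monomial p q d)
  then show ?case using monomial_mod_ptform[OF A] by blast
next
  case (binform_add d f g)
  then obtain c h c' h' where "binform u (d - 1) h" "f = mconst c * pivot_var u A ^ d + ptform u A * h"
    "binform u (d - 1) h'" "g = mconst c' * pivot_var u A ^ d + ptform u A * h'"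
    by blast
  then show ?case
    by (intro exI[of _ "c + c'"] exI[of _ "h + h'"]) (simp add: binform.binform_add mconst_add algebra_simps)
next
  case (binform_scale d f c)
  then obtain c' h where h: "binform u (d - 1) h" "f = mconst c' * pivot_var u A ^ d + ptform u A * h"
    by blast
  have "mconst c * f = mconst (c * c') * pivot_var u A ^ d + ptform u A * (mconst c * h)"
    unfolding h(2) by (simp add: mconst_mult algebra_simps)
  then show ?case using binform.binform_scale[OF h(1)] by blast
qed

lemma binform_dvd_ptform:
  assumes u: "u < 5" and A: "A \<in> P1" and g: "binform u d g"
    and zero: "meval (point_val u A) g = 0"
  shows "\<exists>h. binform u (d - 1) h \<and> g = ptform u A * h"
proof -
  obtain c h where h: "binform u (d - 1) h" "g = mconst c * pivot_var u A ^ d + ptform u A * h"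
    using binform_mod_ptform[OF A g] by blast
  have "meval (point_val u A) (ptform u A) = 0"
    using meval_point_val_ptform_eq_0_iff[OF u A A] by simp
  then have "c * meval (point_val u A) (pivot_var u A) ^ d = 0"
    using zero h(2) by (simp add: meval_add meval_mult meval_power)
  then have "c = 0" using meval_point_val_pivot_var[OF u A] by simp
  with h show ?thesis by auto
qed

lemma binform_split_at_point:
  assumes u: "u < 5" and A: "A \<in> P1" and g: "binform u d g" and e: "binform u d e"
    and e_nz: "meval (point_val u A) e \<noteq> 0"
  shows "\<exists>c h. binform u (d - 1) h \<and> g = mscale c e + ptform u A * h"
proof -
  define c where "c = meval (point_val u A) g / meval (point_val u A) e"
  have "binform u d (g - mconst c * e)" using g e by (intro binform_diff binform_scale)
  moreover have "meval (point_val u A) (g - mconst c * e) = 0"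
    unfolding c_def using e_nz by (simp add: meval_diff meval_mult)
  ultimately obtain h where "binform u (d - 1) h" "g - mconst c * e = ptform u A * h"
    using binform_dvd_ptform[OF u A] by blast
  then show ?thesis by (intro exI[of _ c] exI[of _ h]) (simp add: mscale_eq_mconst_mult algebra_simps)
qed

subsection \<open>Lagrange and Newton bases of binary forms\<close>

lemma meval_point_val_ptform_self: "u < 5 \<Longrightarrow> meval (point_val u A) (ptform u A) = 0"
  unfolding ptform_def point_val_def by (simp add: meval_diff meval_mult mult.commute)

definition lagrange_poly :: "nat \<Rightarrow> ('a::field \<times> 'a) set set \<Rightarrow> ('a \<times> 'a) set \<Rightarrow> 'a mpoly" where
  "lagrange_poly u S A = prod (ptform u) (S - {A})"

lemma binform_lagrange_poly:
  fixes S :: "('a::field \<times> 'a) set set"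
  shows "finite S \<Longrightarrow> A \<in> S \<Longrightarrow> binform u (card S - 1) (lagrange_poly u S A)"
proof -
  assume "finite S" "A \<in> S"
  moreover have "binform u (card (S - {A})) (prod (ptform u) (S - {A}) :: 'a mpoly)"
    using \<open>finite S\<close> by (intro binform_prod binform_ptform) simp
  ultimately show ?thesis unfolding lagrange_poly_def by simp
qed

lemma meval_lagrange_poly_eq_0_iff:
  assumes "u < 5" "finite S" "S \<subseteq> P1" "A' \<in> S"
  shows "meval (point_val u A') (lagrange_poly u S A) = 0 \<longleftrightarrow> A' \<noteq> A"
  using assms meval_point_val_ptform_eq_0_iff[of u A']
  unfolding lagrange_poly_def meval_prod by (subst prod_zero_iff) auto

lemma lagrange_poly_factor:
  "finite S \<Longrightarrow> A' \<in> S \<Longrightarrow> A' \<noteq> A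
    \<Longrightarrow> lagrange_poly u S A = ptform u A' * prod (ptform u) (S - {A} - {A'})"
  unfolding lagrange_poly_def by (subst prod.remove[of _ A']) auto

lemma lagrange_poly_insert:
  "finite S \<Longrightarrow> A \<in> S \<Longrightarrow> A0 \<notin> S
    \<Longrightarrow> lagrange_poly u (insert A0 S) A = ptform u A0 * lagrange_poly u S A"
  unfolding lagrange_poly_def by (subst insert_Diff_if) auto

lemma ptform_mult_span_lagrange_poly:
  assumes h: "h \<in> MV.span (lagrange_poly u S ` S)" and S: "finite S" "A0 \<notin> S"
  shows "ptform u A0 * h \<in> MV.span (lagrange_poly u (insert A0 S) ` insert A0 S)"
proof -
  have "h * ptform u A0 \<in> MV.span (lagrange_poly u (insert A0 S) ` insert A0 S)"
  proof (rule subspace_mult_span[OF MV.subspace_span h])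
    fix e assume "e \<in> lagrange_poly u S ` S"
    then obtain A where A: "A \<in> S" "e = lagrange_poly u S A" by blast
    then have "e * ptform u A0 = lagrange_poly u (insert A0 S) A"
      using lagrange_poly_insert[OF S(1) A(1) S(2)] by (simp add: mult.commute)
    then show "e * ptform u A0 \<in> MV.span (lagrange_poly u (insert A0 S) ` insert A0 S)"
      using A(1) by (simp add: MV.span_base)
  qed
  then show ?thesis by (simp add: mult.commute)
qed

lemma binform_in_span_lagrange_poly:
  assumes u: "u < 5"
  shows "finite S \<Longrightarrow> S \<subseteq> P1 \<Longrightarrow> card S = Suc d \<Longrightarrow> binform u d g
    \<Longrightarrow> g \<in> MV.span (lagrange_poly u S ` S)"
proof (induction S arbitrary: d g rule: finite_induct)
  case empty
  then show ?case by simp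
next
  case (insert A0 S)
  let ?B = "lagrange_poly u (insert A0 S) ` insert A0 S"
  show ?case
  proof (cases "S = {}")
    case True
    obtain c where "g = mconst c" using binform_degree_0_mconst insert True by auto
    moreover have "lagrange_poly u (insert A0 S) A0 = 1" unfolding lagrange_poly_def True by simp
    ultimately have "g = mscale c (lagrange_poly u (insert A0 S) A0)" by (simp add: mscale_eq_mconst_mult)
    then show ?thesis by (simp add: MV.span_base MV.span_scale)
  next
    case False
    have A0: "A0 \<in> P1" and S: "S \<subseteq> P1" and d: "d = card S" using insert by auto
    have e: "binform u d (lagrange_poly u (insert A0 S) A0)"
      using binform_lagrange_poly[of "insert A0 S" A0 u] insert by simp
    have e_nz: "meval (point_val u A0) (lagrange_poly u (insert A0 S) A0) \<noteq> 0"
      using meval_lagrange_poly_eq_0_iff[OF u _ insert.prems(1)] insert by simp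
    obtain c h where h: "binform u (d - 1) h"
      and g: "g = mscale c (lagrange_poly u (insert A0 S) A0) + ptform u A0 * h"
      using binform_split_at_point[OF u A0 insert.prems(3) e e_nz] by blast
    have "h \<in> MV.span (lagrange_poly u S ` S)"
      using insert.IH[OF S _ h] d False insert.hyps(1) by (simp add: card_gt_0_iff)
    then have "ptform u A0 * h \<in> MV.span ?B"
      using ptform_mult_span_lagrange_poly insert.hyps by blast
    moreover have "mscale c (lagrange_poly u (insert A0 S) A0) \<in> MV.span ?B"
      by (intro MV.span_scale MV.span_base) simp
    ultimately show ?thesis unfolding g by (simp add: MV.span_add)
  qed
qed

definition newton_poly :: "nat \<Rightarrow> ('a::field \<times> 'a) set list \<Rightarrow> nat \<Rightarrow> nat \<Rightarrow> 'a mpoly" where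
  "newton_poly u cs d r = prod_list (map (ptform u) (take r cs)) * pivot_var u (cs ! r) ^ (d - r)"

lemma binform_newton_poly: "r \<le> d \<Longrightarrow> r \<le> length cs \<Longrightarrow> binform u d (newton_poly u cs d r)"
  unfolding newton_poly_def
  using binform_mult[OF binform_prod_list[of "take r cs" u "ptform u", OF binform_ptform]
      binform_power[OF binform_pivot_var, of u "d - r"]]
  by simp

lemma newton_poly_Cons: "newton_poly u (C # cs) (Suc d) (Suc r) = ptform u C * newton_poly u cs d r"
  unfolding newton_poly_def by (simp add: mult.assoc)

lemma meval_newton_poly_eq_0:
  assumes "u < 5" "\<rho> < r" "r \<le> length cs"
  shows "meval (point_val u (cs ! \<rho>)) (newton_poly u cs d r) = 0"
proof -
  have "cs ! \<rho> \<in> set (take r cs)" using assms by (auto simp: in_set_conv_nth intro!: exI[of _ \<rho>])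
  then show ?thesis
    using meval_point_val_ptform_self[OF assms(1)]
    unfolding newton_poly_def meval_mult meval_prod_list by (force simp: prod_list_zero_iff)
qed

lemma meval_newton_poly_diagonal:
  assumes u: "u < 5" and \<rho>: "\<rho> < length cs" and cs: "distinct cs" "set cs \<subseteq> P1"
  shows "meval (point_val u (cs ! \<rho>)) (newton_poly u cs d \<rho>) \<noteq> 0"
proof -
  have C: "cs ! \<rho> \<in> P1" using \<rho> cs by auto
  have "cs ! \<rho> \<notin> set (take \<rho> cs)" using \<rho> cs by (auto simp: in_set_conv_nth nth_eq_iff_index_eq)
  moreover have "set (take \<rho> cs) \<subseteq> P1" using cs(2) by (meson order_trans set_take_subset)
  ultimately have "prod_list (map (\<lambda>B. meval (point_val u (cs ! \<rho>)) (ptform u B)) (take \<rho> cs)) \<noteq> 0"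
    using meval_point_val_ptform_eq_0_iff[OF u C] by (auto simp: prod_list_zero_iff)
  then show ?thesis
    using meval_point_val_pivot_var[OF u C]
    unfolding newton_poly_def meval_mult meval_prod_list meval_power by simp
qed

lemma ptform_mult_span_newton_poly:
  assumes y: "y \<in> MV.span (newton_poly u cs d ` {..< min (length cs) (Suc d)})"
  shows "ptform u C * y \<in> MV.span (newton_poly u (C # cs) (Suc d) ` {..< min (length (C # cs)) (Suc (Suc d))})"
proof -
  let ?B = "newton_poly u (C # cs) (Suc d) ` {..< min (length (C # cs)) (Suc (Suc d))}"
  have "y * ptform u C \<in> MV.span ?B"
  proof (rule subspace_mult_span[OF MV.subspace_span y])
    fix e assume "e \<in> newton_poly u cs d ` {..< min (length cs) (Suc d)}"
    then obtain r where "r < min (length cs) (Suc d)" "e = newton_poly u cs d r" by blast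
    then show "e * ptform u C \<in> MV.span ?B"
      using newton_poly_Cons[of u C cs d r]
      by (intro MV.span_base image_eqI[of _ _ "Suc r"]) (auto simp: mult.commute)
  qed
  then show ?thesis by (simp add: mult.commute)
qed

lemma binform_newton_expansion:
  assumes u: "u < 5"
  shows "set cs \<subseteq> P1 \<Longrightarrow> binform u d g \<Longrightarrow>
    \<exists>y h. y \<in> MV.span (newton_poly u cs d ` {..< min (length cs) (Suc d)})
      \<and> binform u (d - length cs) h \<and> (d < length cs \<longrightarrow> h = 0)
      \<and> g = y + prod_list (map (ptform u) cs) * h"
proof (induction cs arbitrary: d g)
  case Nil
  then show ?case by (intro exI[of _ 0] exI[of _ g]) (simp add: MV.span_zero)
next
  case (Cons C cs)
  let ?B = "newton_poly u (C # cs) d ` {..< min (length (C # cs)) (Suc d)}"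
  have C: "C \<in> P1" and cs: "set cs \<subseteq> P1" using Cons by auto
  show ?case
  proof (cases d)
    case 0
    obtain c where "g = mconst c" using binform_degree_0_mconst Cons 0 by blast
    then have "g = mscale c (newton_poly u (C # cs) d 0)"
      unfolding newton_poly_def 0 by (simp add: mscale_eq_mconst_mult)
    then have "g \<in> MV.span ?B" by (simp add: MV.span_base MV.span_scale)
    then show ?thesis using 0 by (intro exI[of _ g] exI[of _ 0]) (simp add: binform_zero)
  next
    case (Suc d')
    have e: "newton_poly u (C # cs) d 0 = pivot_var u C ^ d" unfolding newton_poly_def by simp
    have e_binform: "binform u d (pivot_var u C ^ d)"
      using binform_power[OF binform_pivot_var, of u d C] by simp
    have e_nz: "meval (point_val u C) (pivot_var u C ^ d) \<noteq> 0"
      using meval_point_val_pivot_var[OF u C] by (simp add: meval_power)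
    obtain c h1 where h1: "binform u (d - 1) h1"
      and g: "g = mscale c (pivot_var u C ^ d) + ptform u C * h1"
      using binform_split_at_point[OF u C Cons.prems(2) e_binform e_nz] by blast
    obtain y1 h2 where y1: "y1 \<in> MV.span (newton_poly u cs d' ` {..< min (length cs) (Suc d')})"
      and h2: "binform u (d' - length cs) h2" "d' < length cs \<longrightarrow> h2 = 0"
      and h1_eq: "h1 = y1 + prod_list (map (ptform u) cs) * h2"
      using Cons.IH[OF cs, of d' h1] h1 Suc by auto
    have "ptform u C * y1 \<in> MV.span ?B"
      using ptform_mult_span_newton_poly[OF y1] unfolding Suc .
    moreover have "mscale c (pivot_var u C ^ d) \<in> MV.span ?B"
      unfolding e[symmetric] by (intro MV.span_scale MV.span_base) (simp add: Suc)
    ultimately have "mscale c (pivot_var u C ^ d) + ptform u C * y1 \<in> MV.span ?B"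
      by (simp add: MV.span_add)
    moreover have "g = (mscale c (pivot_var u C ^ d) + ptform u C * y1)
        + prod_list (map (ptform u) (C # cs)) * h2"
      unfolding g h1_eq by (simp add: algebra_simps)
    ultimately show ?thesis using h2 Suc by (intro exI conjI) auto
  qed
qed

lemma independent_modulo_imp_inj_disjoint:
  fixes \<beta> :: "'j \<Rightarrow> 'a::field mpoly"
  assumes J: "finite J" and W: "MV.subspace W"
    and indep: "\<And>c. (\<Sum>x\<in>J. mscale (c x) (\<beta> x)) \<in> W \<Longrightarrow> \<forall>x\<in>J. c x = 0"
  shows "inj_on \<beta> J" "\<beta> ` J \<inter> W = {}"
proof -
  have sum_delta: "(\<Sum>z\<in>J. mscale (if z = x then a else 0) (\<beta> z)) = mscale a (\<beta> x)"
    if "x \<in> J" for x a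
    using J that by (simp add: if_distrib[of "\<lambda>c. mscale c _"] cong: if_cong)
  show "inj_on \<beta> J"
  proof (rule inj_onI, rule ccontr)
    fix x y assume xy: "x \<in> J" "y \<in> J" "\<beta> x = \<beta> y" "x \<noteq> y"
    define c where "c z = (if z = x then 1 else 0) + (if z = y then - 1 else (0::'a))" for z
    have "(\<Sum>z\<in>J. mscale (c z) (\<beta> z)) = mscale 1 (\<beta> x) + mscale (- 1) (\<beta> y)"
      unfolding c_def by (simp only: MV.scale_left_distrib sum.distrib sum_delta xy(1,2))
    also have "\<dots> = 0" using xy(3) by (simp add: MV.scale_minus_left)
    finally have "c x = 0" using indep[of c] MV.subspace_0[OF W] xy(1) by simp
    then show False using xy(4) unfolding c_def by simp
  qed
  show "\<beta> ` J \<inter> W = {}"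
  proof (rule ccontr)
    assume "\<beta> ` J \<inter> W \<noteq> {}"
    then obtain x where x: "x \<in> J" "\<beta> x \<in> W" by auto
    then have "(\<Sum>z\<in>J. mscale (if z = x then 1 else 0) (\<beta> z)) \<in> W" by (simp add: sum_delta)
    then have "\<forall>z\<in>J. (if z = x then 1 else 0) = (0::'a)" by (rule indep)
    then show False using x(1) by auto
  qed
qed

lemma independent_image_Un:
  fixes \<beta> :: "'j \<Rightarrow> 'a::field mpoly"
  assumes J: "finite J" and W: "MV.subspace W"
    and indep: "\<And>c. (\<Sum>x\<in>J. mscale (c x) (\<beta> x)) \<in> W \<Longrightarrow> \<forall>x\<in>J. c x = 0"
    and C: "finite C" "C \<subseteq> W" "MV.independent C"
  shows "MV.independent (\<beta> ` J \<union> C)"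
proof (rule MV.independent_if_scalars_zero)
  show "finite (\<beta> ` J \<union> C)" using J C(1) by simp
  fix f x assume sum0: "(\<Sum>x\<in>\<beta> ` J \<union> C. mscale (f x) x) = 0" and x: "x \<in> \<beta> ` J \<union> C"
  note inj_disj = independent_modulo_imp_inj_disjoint[of J W \<beta>, OF J W indep]
  have "(\<Sum>x\<in>\<beta> ` J \<union> C. mscale (f x) x) = (\<Sum>x\<in>\<beta> ` J. mscale (f x) x) + (\<Sum>x\<in>C. mscale (f x) x)"
    using J C inj_disj(2) by (intro sum.union_disjoint) auto
  then have eq: "(\<Sum>z\<in>J. mscale (f (\<beta> z)) (\<beta> z)) = - (\<Sum>x\<in>C. mscale (f x) x)"
    using sum0 sum.reindex[OF inj_disj(1), where g = "\<lambda>x. mscale (f x) x"] by (simp add: eq_neg_iff_add_eq_0)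
  have "(\<Sum>x\<in>C. mscale (f x) x) \<in> W"
    using C(2) by (intro MV.subspace_sum[OF W] MV.subspace_scale[OF W]) auto
  then have "(\<Sum>z\<in>J. mscale (f (\<beta> z)) (\<beta> z)) \<in> W" unfolding eq by (rule MV.subspace_neg[OF W])
  then have fJ: "\<forall>z\<in>J. f (\<beta> z) = 0" by (rule indep)
  then have "(\<Sum>x\<in>C. mscale (f x) x) = 0" using eq by simp
  then have "\<forall>v\<in>C. f v = 0" using C(1,3) unfolding MV.independent_explicit_finite_subsets by blast
  then show "f x = 0" using x fJ by auto
qed

lemma dim_eq_card_plus_dim_subspace:
  fixes V W :: "'a::field mpoly set" and \<beta> :: "'j \<Rightarrow> 'a mpoly"
  assumes J: "finite J" and W: "MV.subspace W" "W \<subseteq> V" and \<beta>: "\<beta> ` J \<subseteq> V"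
    and span: "V \<subseteq> MV.span (\<beta> ` J \<union> W)" and F: "finite F" "V \<subseteq> MV.span F"
    and indep: "\<And>c. (\<Sum>x\<in>J. mscale (c x) (\<beta> x)) \<in> W \<Longrightarrow> \<forall>x\<in>J. c x = 0"
  shows "MV.dim V = card J + MV.dim W"
proof -
  obtain C where C: "C \<subseteq> W" "MV.independent C" "W \<subseteq> MV.span C" "card C = MV.dim W"
    using MV.basis_exists by blast
  have finC: "finite C" using MV.independent_span_bound[OF F(1) C(2)] C(1) W(2) F(2) by blast
  note inj_disj = independent_modulo_imp_inj_disjoint[of J W \<beta>, OF J W(1) indep]
  have "\<beta> ` J \<union> W \<subseteq> MV.span (\<beta> ` J \<union> C)"
    using C(3) MV.span_superset[of "\<beta> ` J \<union> C"] MV.span_mono[of C "\<beta> ` J \<union> C"] by blast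
  then have "V \<subseteq> MV.span (\<beta> ` J \<union> C)"
    using span MV.span_minimal[OF _ MV.subspace_span] by blast
  then have "card (\<beta> ` J \<union> C) = MV.dim V"
    using \<beta> C(1) W(2) independent_image_Un[OF J W(1) indep finC C(1,2)]
    by (intro MV.basis_card_eq_dim) auto
  moreover have "card (\<beta> ` J \<union> C) = card J + card C"
  proof -
    have "\<beta> ` J \<inter> C = {}" using inj_disj(2) C(1) by blast
    then show ?thesis using J finC by (simp add: card_Un_disjoint card_image[OF inj_disj(1)])
  qed
  ultimately show ?thesis using C(4) by simp
qed

lemma triangular_system_zero:
  fixes c :: "nat \<Rightarrow> 'a::field"
  assumes sums: "\<And>\<rho>. \<rho> < N \<Longrightarrow> (\<Sum>r<N. c r * a r \<rho>) = 0"
    and upper: "\<And>r \<rho>. \<rho> < r \<Longrightarrow> r < N \<Longrightarrow> a r \<rho> = 0"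
    and diagonal: "\<And>\<rho>. \<rho> < N \<Longrightarrow> a \<rho> \<rho> \<noteq> 0"
  shows "\<rho> < N \<Longrightarrow> c \<rho> = 0"
proof (induction \<rho> rule: less_induct)
  case (less \<rho>)
  have "c r * a r \<rho> = 0" if "r \<in> {..<N} - {\<rho>}" for r
    using that less upper by (cases "r < \<rho>") auto
  then have "(\<Sum>r\<in>{..<N} - {\<rho>}. c r * a r \<rho>) = 0" by (rule sum.neutral[rule_format])
  then have "(\<Sum>r<N. c r * a r \<rho>) = c \<rho> * a \<rho> \<rho>"
    using less.prems by (simp add: sum.remove)
  then show ?case using sums[OF less.prems] diagonal[OF less.prems] by simp
qed

definition line_over :: "('a::field \<times> 'a) set \<Rightarrow> ('a \<times> 'a) set \<Rightarrow> 'a pt3 set" where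
  "line_over A B = {P \<in> P1cube. fst P = A \<and> fst (snd P) = B}"

lemma lvan_iff:
  assumes l: "l \<noteq> (0, 0)" and A: "A \<in> P1"
  shows "lvan l A \<longleftrightarrow> A = pcls (snd l, - fst l)"
proof
  assume lv: "lvan l A"
  have B: "pcls (snd l, - fst l) \<in> P1" using l by (intro pcls_P1) (cases l, auto)
  obtain \<mu> where \<mu>: "rep (pcls (snd l, - fst l)) = (\<mu> * snd l, \<mu> * - fst l)"
    using P1_rep(1)[OF B] unfolding pcls_def by auto
  have "snd (rep (pcls (snd l, - fst l))) * fst (rep A) - fst (rep (pcls (snd l, - fst l))) * snd (rep A)
     = - \<mu> * (fst l * fst (rep A) + snd l * snd (rep A))"
    unfolding \<mu> by (simp add: algebra_simps)
  also have "\<dots> = 0" using lv unfolding lvan_def by simp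
  finally show "A = pcls (snd l, - fst l)" using P1_eq_if_cross_zero[OF A B] by blast
next
  assume "A = pcls (snd l, - fst l)"
  then obtain \<mu> where "rep A = (\<mu> * snd l, \<mu> * - fst l)"
    using P1_rep(1)[OF A] unfolding pcls_def by auto
  then show "lvan l A" unfolding lvan_def by (simp add: algebra_simps)
qed

lemma line110_eq_line_over:
  assumes l: "l \<noteq> (0, 0)" and m: "m \<noteq> (0, 0)"
  shows "line110 l m = line_over (pcls (snd l, - fst l)) (pcls (snd m, - fst m))"
proof -
  have "lvan l (fst P) \<and> lvan m (fst (snd P)) \<longleftrightarrow>
      fst P = pcls (snd l, - fst l) \<and> fst (snd P) = pcls (snd m, - fst m)" if "P \<in> P1cube" for P
    using that lvan_iff[OF l] lvan_iff[OF m] unfolding P1cube_def by auto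
  then show ?thesis unfolding line110_def line_over_def by blast
qed

lemma pcls_uminus_rep:
  assumes A: "A \<in> P1" shows "pcls (- fst (rep A), - snd (rep A)) = A"
proof -
  have "(- fst (rep A), - snd (rep A)) \<in> pcls (rep A)"
    unfolding pcls_def by (intro CollectI exI[of _ "- 1"]) simp
  then show ?thesis using pcls_eq_if_mem P1_rep(3)[OF A] by metis
qed

lemma Lines110_eq: "Lines110 = (\<lambda>(A, B). line_over A B) ` (P1 \<times> P1)"
proof
  show "Lines110 \<subseteq> (\<lambda>(A, B). line_over A B) ` (P1 \<times> P1)"
  proof
    fix L assume "L \<in> Lines110"
    then obtain l m where lm: "L = line110 l m" "l \<noteq> (0, 0)" "m \<noteq> (0, 0)"
      unfolding Lines110_def by auto
    have "pcls (snd l, - fst l) \<in> P1" "pcls (snd m, - fst m) \<in> P1"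
      using lm by (auto intro!: pcls_P1 simp: prod_eq_iff)
    then show "L \<in> (\<lambda>(A, B). line_over A B) ` (P1 \<times> P1)"
      using line110_eq_line_over[OF lm(2,3)] lm(1) by force
  qed
  show "(\<lambda>(A, B). line_over A B) ` (P1 \<times> P1) \<subseteq> Lines110"
  proof
    fix L assume "L \<in> (\<lambda>(A, B). line_over A B) ` (P1 \<times> P1)"
    then obtain A B where AB: "A \<in> P1" "B \<in> P1" "L = line_over A B" by auto
    define l where "l = (snd (rep A), - fst (rep A))"
    define m where "m = (snd (rep B), - fst (rep B))"
    have lm: "l \<noteq> (0, 0)" "m \<noteq> (0, 0)"
      unfolding l_def m_def using P1_rep(2) AB by (auto simp: prod_eq_iff)
    have "line110 l m = L"
      using line110_eq_line_over[OF lm] pcls_uminus_rep[OF AB(1)] pcls_uminus_rep[OF AB(2)] AB(3)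
      unfolding l_def m_def by simp
    then show "L \<in> Lines110" unfolding Lines110_def using lm by blast
  qed
qed

lemma inj_on_line_over: "inj_on (\<lambda>(A, B). line_over A B) (P1 \<times> P1)"
proof (rule inj_onI, clarify)
  fix A B A' B' :: "('a \<times> 'a) set"
  assume "A \<in> P1" "B \<in> P1" and eq: "line_over A B = line_over A' B'"
  moreover have "(A, B, pcls (1, 0)) \<in> line_over A B"
    unfolding line_over_def P1cube_def using pcls_P1[of "(1, 0)"] \<open>A \<in> P1\<close> \<open>B \<in> P1\<close> by auto
  ultimately show "A = A' \<and> B = B'" unfolding line_over_def by auto
qed

lemma sum_le_indicator_eq_min: "(\<Sum>m = 1..K. if m \<le> (a::nat) then 1 else 0) = min a K"
  by (induction K) (auto simp: sum.cl_ivl_Suc)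

lemma card_filter_eq_sum: "finite A \<Longrightarrow> card {x \<in> A. P x} = (\<Sum>x\<in>A. if P x then 1 else (0::nat))"
  unfolding card_eq_sum by (rule sum.inter_filter)

subsection \<open>The Hilbert function at \<open>(|\<pi>\<^sub>1(X)| - 1, |\<pi>\<^sub>2(X)| - 1, k)\<close>\<close>

locale finite_point_set =
  fixes X :: "'a::field pt3 set" and k :: nat
  assumes finite_X: "finite X" and X_subset: "X \<subseteq> P1cube" and X_nonempty: "X \<noteq> {}"
begin

definition "S = fst ` X"
definition "T = (fst \<circ> snd) ` X"
definition "Q = (\<lambda>P. (fst P, fst (snd P))) ` X"
definition "fibre q = {C. (fst q, snd q, C) \<in> X}"
definition "fibre_list q = (SOME cs. distinct cs \<and> set cs = fibre q)"
definition "d1 = card S - 1"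
definition "d2 = card T - 1"
definition "V = (Rdeg d1 d2 k :: 'a mpoly set)"
definition "W = IX X \<inter> V"

text \<open>The basis of \<open>V\<close> modulo \<open>W\<close>: one element for each line \<open>q\<close> of type \<open>(1,1,0)\<close> meeting \<open>X\<close>
  and each \<open>r < min |X \<inter> q| (k + 1)\<close>.\<close>

definition "basis_index = Sigma Q (\<lambda>q. {..< min (card (fibre q)) (Suc k)})"
definition "basis_poly x = (case x of (q, r) \<Rightarrow>
  lagrange_poly 0 S (fst q) * lagrange_poly 2 T (snd q) * newton_poly 4 (fibre_list q) k r)"

definition "point3_val P = (\<lambda>i. if i < 2 then point_val 0 (fst P) i
  else if i < 4 then point_val 2 (fst (snd P)) i else point_val 4 (snd (snd P)) i)"

lemma finite_S: "finite S" and finite_T: "finite T" and finite_Q: "finite Q"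
  unfolding S_def T_def Q_def using finite_X by auto

lemma X_P1: "P \<in> X \<Longrightarrow> fst P \<in> P1 \<and> fst (snd P) \<in> P1 \<and> snd (snd P) \<in> P1"
  using X_subset unfolding P1cube_def by auto

lemma S_subset_P1: "S \<subseteq> P1" and T_subset_P1: "T \<subseteq> P1"
  unfolding S_def T_def using X_P1 by auto

lemma card_S: "card S = Suc d1" and card_T: "card T = Suc d2"
  unfolding d1_def d2_def S_def T_def using X_nonempty finite_X by (auto simp: card_gt_0_iff)

lemma Q_subset: "q \<in> Q \<Longrightarrow> fst q \<in> S \<and> snd q \<in> T"
  unfolding Q_def S_def T_def by force

lemma finite_fibre: "finite (fibre q)"
proof -
  have "fibre q \<subseteq> snd ` snd ` X" unfolding fibre_def by force
  then show ?thesis using finite_X by (meson finite_imageI finite_subset)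
qed

lemma fibre_subset_P1: "fibre q \<subseteq> P1"
  unfolding fibre_def using X_P1 by fastforce

lemma fibre_list: "distinct (fibre_list q)" "set (fibre_list q) = fibre q"
  "length (fibre_list q) = card (fibre q)"
proof -
  have "\<exists>cs. distinct cs \<and> set cs = fibre q" using finite_distinct_list[OF finite_fibre] by blast
  then have "distinct (fibre_list q) \<and> set (fibre_list q) = fibre q"
    unfolding fibre_list_def by (rule someI_ex)
  then show "distinct (fibre_list q)" "set (fibre_list q) = fibre q"
    "length (fibre_list q) = card (fibre q)"
    using distinct_card by metis+
qed

lemma finite_basis_index: "finite basis_index"
  unfolding basis_index_def using finite_Q by auto

lemma MV_subspace_W: "MV.subspace W"
  unfolding W_def V_def by (rule MV_subspace_IX_Rdeg)

lemma mem_W: "p \<in> V \<Longrightarrow> (\<And>P. P \<in> X \<Longrightarrow> p \<in> Ipt P) \<Longrightarrow> p \<in> W"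
  unfolding W_def IX_def V_def using Rdeg_subset_Rring by blast

lemma mult_binform_in_V:
  "binform 0 d1 x \<Longrightarrow> binform 2 d2 y \<Longrightarrow> binform 4 k z \<Longrightarrow> x * y * z \<in> V"
  unfolding V_def using Rdeg_mult[OF Rdeg_mult] binform_Rdeg_factors by fastforce

lemma binform_lagrange_poly_S: "A \<in> S \<Longrightarrow> binform 0 d1 (lagrange_poly 0 S A)"
  and binform_lagrange_poly_T: "B \<in> T \<Longrightarrow> binform 2 d2 (lagrange_poly 2 T B)"
  using binform_lagrange_poly[OF finite_S] binform_lagrange_poly[OF finite_T] card_S card_T
  by fastforce+

lemma binform_newton_poly_fibre: "r < min (card (fibre q)) (Suc k) \<Longrightarrow> binform 4 k (newton_poly 4 (fibre_list q) k r)"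
  using fibre_list(3) by (intro binform_newton_poly) auto

lemma basis_poly_in_V: "x \<in> basis_index \<Longrightarrow> basis_poly x \<in> V"
  unfolding basis_index_def basis_poly_def
  by (auto intro!: mult_binform_in_V binform_lagrange_poly_S binform_lagrange_poly_T
      binform_newton_poly_fibre dest: Q_subset)

lemma meval_point3_val:
  "binform 0 d f \<Longrightarrow> meval (point3_val P) f = meval (point_val 0 (fst P)) f"
  "binform 2 d f \<Longrightarrow> meval (point3_val P) f = meval (point_val 2 (fst (snd P))) f"
  "binform 4 d f \<Longrightarrow> meval (point3_val P) f = meval (point_val 4 (snd (snd P))) f"
  by (rule binform_meval_cong; simp add: point3_val_def point_val_def)+

lemma meval_point3_val_Ipt: "p \<in> Ipt P \<Longrightarrow> meval (point3_val P) p = 0"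
proof -
  assume "p \<in> Ipt P"
  then obtain f g h where p: "p = f * ptform 0 (fst P) + g * ptform 2 (fst (snd P)) + h * ptform 4 (snd (snd P))"
    unfolding Ipt_def by blast
  have "meval (point3_val P) (ptform 0 (fst P)) = 0" "meval (point3_val P) (ptform 2 (fst (snd P))) = 0"
    "meval (point3_val P) (ptform 4 (snd (snd P))) = 0"
    by (simp_all add: meval_point3_val[OF binform_ptform] meval_point_val_ptform_self)
  then show ?thesis unfolding p by (simp add: meval_add meval_mult)
qed

lemma Rring_ptform: "u < 5 \<Longrightarrow> ptform u A \<in> Rring"
  by (rule binform_Rring[OF binform_ptform])

lemma Rring_lagrange_poly: "u < 5 \<Longrightarrow> lagrange_poly u U A \<in> Rring"
  unfolding lagrange_poly_def by (intro Rring_prod Rring_ptform)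

lemma lagrange_product_in_Ipt:
  assumes P: "P \<in> X" and q: "fst q \<in> S" "snd q \<in> T" and off: "(fst P, fst (snd P)) \<noteq> q"
    and r: "r \<in> Rring"
  shows "lagrange_poly 0 S (fst q) * lagrange_poly 2 T (snd q) * r \<in> Ipt P"
proof (cases "fst P = fst q")
  case False
  have "fst P \<in> S" using P unfolding S_def by auto
  then have "lagrange_poly 0 S (fst q) = ptform 0 (fst P) * prod (ptform 0) (S - {fst q} - {fst P})"
    using lagrange_poly_factor[OF finite_S] False by blast
  moreover have "prod (ptform 0) (S - {fst q} - {fst P}) * lagrange_poly 2 T (snd q) * r
      * ptform 0 (fst P) \<in> Ipt P"
    using r by (intro Ipt_generators Rring_mult Rring_prod Rring_ptform Rring_lagrange_poly) auto
  ultimately show ?thesis by (simp add: ac_simps)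
next
  case True
  then have "fst (snd P) \<noteq> snd q" using off by (cases q) auto
  moreover have "fst (snd P) \<in> T" using P unfolding T_def by auto
  ultimately have "lagrange_poly 2 T (snd q) = ptform 2 (fst (snd P)) * prod (ptform 2) (T - {snd q} - {fst (snd P)})"
    using lagrange_poly_factor[OF finite_T] by blast
  moreover have "prod (ptform 2) (T - {snd q} - {fst (snd P)}) * lagrange_poly 0 S (fst q) * r
      * ptform 2 (fst (snd P)) \<in> Ipt P"
    using r by (intro Ipt_generators Rring_mult Rring_prod Rring_ptform Rring_lagrange_poly) auto
  ultimately show ?thesis by (simp add: ac_simps)
qed

lemma lagrange_product_fibre_in_W:
  assumes q: "q \<in> Q" and h: "binform 4 (k - card (fibre q)) h" and le: "card (fibre q) \<le> k"
  shows "lagrange_poly 0 S (fst q) * lagrange_poly 2 T (snd q) * (prod (ptform 4) (fibre q) * h) \<in> W"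
proof (rule mem_W)
  have "binform 4 (card (fibre q) + (k - card (fibre q))) (prod (ptform 4) (fibre q) * h)"
    using finite_fibre binform_ptform h by (intro binform_mult binform_prod)
  then show "lagrange_poly 0 S (fst q) * lagrange_poly 2 T (snd q) * (prod (ptform 4) (fibre q) * h) \<in> V"
    using q le by (auto intro!: mult_binform_in_V binform_lagrange_poly_S binform_lagrange_poly_T
        dest: Q_subset)
  fix P assume P: "P \<in> X"
  have hR: "prod (ptform 4) (fibre q) * h \<in> Rring"
    using h by (intro Rring_mult Rring_prod Rring_ptform binform_Rring[of 4]) auto
  show "lagrange_poly 0 S (fst q) * lagrange_poly 2 T (snd q) * (prod (ptform 4) (fibre q) * h) \<in> Ipt P"
  proof (cases "(fst P, fst (snd P)) = q")
    case False
    then show ?thesis using lagrange_product_in_Ipt[OF P _ _ False hR] Q_subset[OF q] by blast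
  next
    case True
    then have "snd (snd P) \<in> fibre q" using P unfolding fibre_def by auto
    then have "prod (ptform 4) (fibre q) = ptform 4 (snd (snd P)) * prod (ptform 4) (fibre q - {snd (snd P)})"
      using finite_fibre by (rule prod.remove[rotated])
    moreover have "lagrange_poly 0 S (fst q) * lagrange_poly 2 T (snd q) * prod (ptform 4) (fibre q - {snd (snd P)})
        * h * ptform 4 (snd (snd P)) \<in> Ipt P"
      using h by (intro Ipt_generators Rring_mult Rring_prod Rring_ptform Rring_lagrange_poly
          binform_Rring[of 4]) auto
    ultimately show ?thesis by (simp add: ac_simps)
  qed
qed

lemma lagrange_product_off_Q_in_W:
  assumes A: "A \<in> S" and B: "B \<in> T" and z: "binform 4 k z" and off: "(A, B) \<notin> Q"
  shows "lagrange_poly 0 S A * lagrange_poly 2 T B * z \<in> W"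
proof (rule mem_W)
  show "lagrange_poly 0 S A * lagrange_poly 2 T B * z \<in> V"
    using A B z by (intro mult_binform_in_V binform_lagrange_poly_S binform_lagrange_poly_T)
  fix P assume P: "P \<in> X"
  then have "(fst P, fst (snd P)) \<noteq> (A, B)" using off unfolding Q_def by force
  then show "lagrange_poly 0 S A * lagrange_poly 2 T B * z \<in> Ipt P"
    using lagrange_product_in_Ipt[OF P, of "(A, B)"] A B binform_Rring[OF z] by simp
qed

lemma lagrange_product_in_span:
  assumes A: "A \<in> S" and B: "B \<in> T" and z: "binform 4 k z"
  shows "lagrange_poly 0 S A * lagrange_poly 2 T B * z \<in> MV.span (basis_poly ` basis_index \<union> W)"
proof (cases "(A, B) \<in> Q")
  case False
  then show ?thesis using lagrange_product_off_Q_in_W[OF A B z] by (auto intro: MV.span_base)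
next
  case True
  let ?q = "(A, B)" and ?L = "lagrange_poly 0 S A * lagrange_poly 2 T B"
  let ?N = "newton_poly 4 (fibre_list ?q) k ` {..< min (card (fibre ?q)) (Suc k)}"
  obtain y h where y: "y \<in> MV.span ?N" and h: "binform 4 (k - card (fibre ?q)) h"
    "k < card (fibre ?q) \<longrightarrow> h = 0" and z_eq: "z = y + prod (ptform 4) (fibre ?q) * h"
    using binform_newton_expansion[of 4 "fibre_list ?q" k z] fibre_subset_P1 fibre_list z
    by (auto simp: prod.distinct_set_conv_list[symmetric])
  have "y * ?L \<in> MV.span (basis_poly ` basis_index \<union> W)"
  proof (rule subspace_mult_span[OF MV.subspace_span y])
    fix e assume "e \<in> ?N"
    then obtain r where r: "r < min (card (fibre ?q)) (Suc k)" "e = newton_poly 4 (fibre_list ?q) k r"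
      by blast
    then have "e * ?L = basis_poly (?q, r)" unfolding basis_poly_def by (simp add: ac_simps)
    moreover have "(?q, r) \<in> basis_index" unfolding basis_index_def using True r by auto
    ultimately show "e * ?L \<in> MV.span (basis_poly ` basis_index \<union> W)" by (auto intro: MV.span_base)
  qed
  moreover have "?L * (prod (ptform 4) (fibre ?q) * h) \<in> MV.span (basis_poly ` basis_index \<union> W)"
  proof (cases "k < card (fibre ?q)")
    case True
    then show ?thesis using h(2) by (simp add: MV.span_zero)
  next
    case False
    then show ?thesis using lagrange_product_fibre_in_W[OF \<open>?q \<in> Q\<close> h(1)] by (auto intro: MV.span_base)
  qed
  moreover have "?L * z = y * ?L + ?L * (prod (ptform 4) (fibre ?q) * h)"
    unfolding z_eq by (simp add: algebra_simps)
  ultimately show ?thesis by (simp add: MV.span_add)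
qed

lemma V_subset_span: "V \<subseteq> MV.span (basis_poly ` basis_index \<union> W)"
proof -
  let ?B = "MV.span (basis_poly ` basis_index \<union> W)"
  have "monomial3 d1 d2 k a b c \<in> ?B" if abc: "a \<le> d1" "b \<le> d2" "c \<le> k" for a b c
  proof -
    let ?x = "mvar 0 ^ a * mvar 1 ^ (d1 - a)" and ?y = "mvar 2 ^ b * mvar 3 ^ (d2 - b)"
      and ?z = "mvar 4 ^ c * mvar 5 ^ (k - c)"
    note factors = binform_monomial3_factors[OF abc]
    have x: "?x \<in> MV.span (lagrange_poly 0 S ` S)"
      by (rule binform_in_span_lagrange_poly[OF _ finite_S S_subset_P1 card_S factors(1)]) simp
    have y: "?y \<in> MV.span (lagrange_poly 2 T ` T)"
      by (rule binform_in_span_lagrange_poly[OF _ finite_T T_subset_P1 card_T factors(2)]) simp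
    have "e * (?y * ?z) \<in> ?B" if "e \<in> lagrange_poly 0 S ` S" for e
    proof -
      obtain A where A: "A \<in> S" "e = lagrange_poly 0 S A" using \<open>e \<in> _\<close> by blast
      have "f * (e * ?z) \<in> ?B" if "f \<in> lagrange_poly 2 T ` T" for f
      proof -
        obtain B where B: "B \<in> T" "f = lagrange_poly 2 T B" using \<open>f \<in> _\<close> by blast
        show ?thesis
          using lagrange_product_in_span[OF A(1) B(1) factors(3)] unfolding A(2) B(2)
          by (simp add: ac_simps)
      qed
      then have "?y * (e * ?z) \<in> ?B" by (rule subspace_mult_span[OF MV.subspace_span y])
      then show ?thesis by (simp add: ac_simps)
    qed
    then have "?x * (?y * ?z) \<in> ?B" by (rule subspace_mult_span[OF MV.subspace_span x])
    then show ?thesis unfolding monomial3_def by (simp add: ac_simps)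
  qed
  then have "(\<lambda>(a, b, c). monomial3 d1 d2 k a b c) ` ({..d1} \<times> {..d2} \<times> {..k}) \<subseteq> ?B" by auto
  then show ?thesis
    using Rdeg_subset_span_monomial3[of d1 d2 k] MV.span_minimal[OF _ MV.subspace_span]
    unfolding V_def by blast
qed

definition "lagrange_weight q = meval (point_val 0 (fst q)) (lagrange_poly 0 S (fst q))
  * meval (point_val 2 (snd q)) (lagrange_poly 2 T (snd q))"

lemma lagrange_weight_nonzero: "q \<in> Q \<Longrightarrow> lagrange_weight q \<noteq> 0"
  unfolding lagrange_weight_def
  using meval_lagrange_poly_eq_0_iff[OF _ finite_S S_subset_P1, of 0 "fst q" "fst q"]
    meval_lagrange_poly_eq_0_iff[OF _ finite_T T_subset_P1, of 2 "snd q" "snd q"]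
  by (auto dest: Q_subset)

lemma meval_basis_poly:
  assumes x: "x \<in> basis_index" and q0: "q0 \<in> Q"
  shows "meval (point3_val (fst q0, snd q0, C)) (basis_poly x) = (if fst x = q0
    then lagrange_weight q0 * meval (point_val 4 C) (newton_poly 4 (fibre_list q0) k (snd x)) else 0)"
proof -
  obtain q r where x_eq: "x = (q, r)" and q: "q \<in> Q" and r: "r < min (card (fibre q)) (Suc k)"
    using x unfolding basis_index_def by auto
  have S: "fst q \<in> S" "fst q0 \<in> S" and T: "snd q \<in> T" "snd q0 \<in> T" using Q_subset q q0 by auto
  have "meval (point3_val (fst q0, snd q0, C)) (basis_poly x)
      = meval (point_val 0 (fst q0)) (lagrange_poly 0 S (fst q))
        * meval (point_val 2 (snd q0)) (lagrange_poly 2 T (snd q))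
        * meval (point_val 4 C) (newton_poly 4 (fibre_list q) k r)"
    unfolding x_eq basis_poly_def
    using meval_point3_val(1)[OF binform_lagrange_poly_S[OF S(1)]]
      meval_point3_val(2)[OF binform_lagrange_poly_T[OF T(1)]]
      meval_point3_val(3)[OF binform_newton_poly_fibre[OF r]]
    by (simp add: meval_mult)
  then show ?thesis
    using meval_lagrange_poly_eq_0_iff[OF _ finite_S S_subset_P1 S(2), of 0 "fst q"]
      meval_lagrange_poly_eq_0_iff[OF _ finite_T T_subset_P1 T(2), of 2 "snd q"]
    unfolding x_eq lagrange_weight_def by (cases q0, cases q) auto
qed

lemma meval_basis_combination:
  assumes q0: "q0 \<in> Q"
  shows "meval (point3_val (fst q0, snd q0, C)) (\<Sum>x\<in>basis_index. mscale (c x) (basis_poly x))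
    = (\<Sum>r < min (card (fibre q0)) (Suc k).
        c (q0, r) * (lagrange_weight q0 * meval (point_val 4 C) (newton_poly 4 (fibre_list q0) k r)))"
proof -
  let ?f = "\<lambda>r. c (q0, r) * (lagrange_weight q0 * meval (point_val 4 C) (newton_poly 4 (fibre_list q0) k r))"
  have "meval (point3_val (fst q0, snd q0, C)) (\<Sum>x\<in>basis_index. mscale (c x) (basis_poly x))
      = (\<Sum>x\<in>basis_index. c x * meval (point3_val (fst q0, snd q0, C)) (basis_poly x))"
    by (simp add: meval_sum mscale_eq_mconst_mult meval_mult)
  also have "\<dots> = (\<Sum>x\<in>basis_index. if fst x = q0 then ?f (snd x) else 0)"
  proof (rule sum.cong[OF refl])
    fix x assume "x \<in> basis_index"
    then show "c x * meval (point3_val (fst q0, snd q0, C)) (basis_poly x)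
        = (if fst x = q0 then ?f (snd x) else 0)"
      using meval_basis_poly[OF _ q0] by (cases x) auto
  qed
  also have "\<dots> = (\<Sum>x\<in>basis_index \<inter> {x. fst x = q0}. ?f (snd x))"
    using finite_basis_index by (simp add: sum.inter_restrict)
  also have "basis_index \<inter> {x. fst x = q0} = Pair q0 ` {..< min (card (fibre q0)) (Suc k)}"
    unfolding basis_index_def using q0 by auto
  finally show ?thesis by (simp add: sum.reindex inj_on_def)
qed

lemma basis_poly_independent_modulo_W:
  assumes in_W: "(\<Sum>x\<in>basis_index. mscale (c x) (basis_poly x)) \<in> W"
  shows "\<forall>x\<in>basis_index. c x = 0"
proof
  fix x assume "x \<in> basis_index"
  then obtain q0 \<rho> where x: "x = (q0, \<rho>)" and q0: "q0 \<in> Q"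
    and \<rho>: "\<rho> < min (card (fibre q0)) (Suc k)"
    unfolding basis_index_def by auto
  let ?N = "min (card (fibre q0)) (Suc k)" and ?cs = "fibre_list q0"
  have "c (q0, \<rho>) = 0"
  proof (rule triangular_system_zero[where
        a = "\<lambda>r \<rho>'. lagrange_weight q0 * meval (point_val 4 (?cs ! \<rho>')) (newton_poly 4 ?cs k r)"])
    fix \<rho>' assume \<rho>': "\<rho>' < ?N"
    then have "?cs ! \<rho>' \<in> fibre q0" using fibre_list by (metis min_less_iff_conj nth_mem)
    then have "(fst q0, snd q0, ?cs ! \<rho>') \<in> X" unfolding fibre_def by simp
    then have "meval (point3_val (fst q0, snd q0, ?cs ! \<rho>')) (\<Sum>x\<in>basis_index. mscale (c x) (basis_poly x)) = 0"
      using in_W meval_point3_val_Ipt unfolding W_def IX_def by blast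
    then show "(\<Sum>r<?N. c (q0, r) * (lagrange_weight q0
        * meval (point_val 4 (?cs ! \<rho>')) (newton_poly 4 ?cs k r))) = 0"
      by (simp add: meval_basis_combination[OF q0])
  next
    fix r \<rho>' assume "\<rho>' < r" "r < ?N"
    then show "lagrange_weight q0 * meval (point_val 4 (?cs ! \<rho>')) (newton_poly 4 ?cs k r) = 0"
      using meval_newton_poly_eq_0[of 4 \<rho>' r ?cs k] fibre_list(3) by simp
  next
    fix \<rho>' assume "\<rho>' < ?N"
    then show "lagrange_weight q0 * meval (point_val 4 (?cs ! \<rho>')) (newton_poly 4 ?cs k \<rho>') \<noteq> 0"
      using meval_newton_poly_diagonal[of 4 \<rho>' ?cs k] lagrange_weight_nonzero[OF q0]
        fibre_list fibre_subset_P1 by simp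
  qed (rule \<rho>)
  then show "c x = 0" unfolding x .
qed

lemma dim_V: "MV.dim V = card basis_index + MV.dim W"
proof (rule dim_eq_card_plus_dim_subspace[where \<beta> = basis_poly])
  show "V \<subseteq> MV.span ((\<lambda>(a, b, c). monomial3 d1 d2 k a b c) ` ({..d1} \<times> {..d2} \<times> {..k}))"
    unfolding V_def by (rule Rdeg_subset_span_monomial3)
  show "W \<subseteq> V" unfolding W_def by blast
qed (use finite_basis_index MV_subspace_W basis_poly_in_V V_subset_span
    basis_poly_independent_modulo_W in auto)

lemma HF_eq_sum_min: "HF X (card (fst ` X) - 1) (card ((fst \<circ> snd) ` X) - 1) k
  = (\<Sum>q\<in>Q. min (card (fibre q)) (Suc k))"
proof -
  have "HF X (card (fst ` X) - 1) (card ((fst \<circ> snd) ` X) - 1) k = MV.dim V - MV.dim W"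
    unfolding HF_def kdim_def V_def W_def d1_def d2_def S_def T_def by (rule refl)
  also have "\<dots> = card basis_index" using dim_V by simp
  also have "\<dots> = (\<Sum>q\<in>Q. min (card (fibre q)) (Suc k))"
    unfolding basis_index_def using finite_Q by (simp add: card_SigmaI)
  finally show ?thesis .
qed

subsection \<open>Counting the lines of type \<open>(1,1,0)\<close> through \<open>X\<close>\<close>

lemma card_X_Int_line_over: "card (X \<inter> line_over A B) = card (fibre (A, B))"
proof -
  have "X \<inter> line_over A B = (\<lambda>C. (A, B, C)) ` fibre (A, B)"
    unfolding line_over_def fibre_def using X_subset by force
  then show ?thesis by (simp add: card_image inj_on_def)
qed

lemma card_fibre_le: "card (fibre q) \<le> card X"
proof -
  have "(\<lambda>C. (fst q, snd q, C)) ` fibre q \<subseteq> X" unfolding fibre_def by auto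
  then have "card ((\<lambda>C. (fst q, snd q, C)) ` fibre q) \<le> card X" by (rule card_mono[OF finite_X])
  then show ?thesis by (simp add: card_image inj_on_def)
qed

lemma Lines110_meeting_X:
  assumes "1 \<le> n"
  shows "{L \<in> Lines110. card (X \<inter> L) = n} = (\<lambda>(A, B). line_over A B) ` {q \<in> Q. card (fibre q) = n}"
proof
  show "{L \<in> Lines110. card (X \<inter> L) = n} \<subseteq> (\<lambda>(A, B). line_over A B) ` {q \<in> Q. card (fibre q) = n}"
  proof
    fix L assume "L \<in> {L \<in> Lines110. card (X \<inter> L) = n}"
    then obtain A B where L: "L = line_over A B" and n: "card (fibre (A, B)) = n"
      unfolding Lines110_eq by (auto simp: card_X_Int_line_over)
    then have "fibre (A, B) \<noteq> {}" using assms by auto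
    then have "(A, B) \<in> Q" unfolding fibre_def Q_def by force
    then show "L \<in> (\<lambda>(A, B). line_over A B) ` {q \<in> Q. card (fibre q) = n}" using L n by force
  qed
  show "(\<lambda>(A, B). line_over A B) ` {q \<in> Q. card (fibre q) = n} \<subseteq> {L \<in> Lines110. card (X \<inter> L) = n}"
  proof
    fix L assume "L \<in> (\<lambda>(A, B). line_over A B) ` {q \<in> Q. card (fibre q) = n}"
    then obtain q where q: "q \<in> Q" "card (fibre q) = n" "L = line_over (fst q) (snd q)"
      by (auto simp: case_prod_beta)
    then have "q \<in> P1 \<times> P1" using Q_subset[OF q(1)] S_subset_P1 T_subset_P1 by (auto simp: mem_Times_iff)
    then have "L \<in> Lines110" unfolding Lines110_eq q(3) by (rule rev_image_eqI) (simp add: case_prod_beta)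
    moreover have "card (X \<inter> L) = n" using q card_X_Int_line_over[of "fst q" "snd q"] by simp
    ultimately show "L \<in> {L \<in> Lines110. card (X \<inter> L) = n}" by blast
  qed
qed

lemma rnum_eq_card: "1 \<le> n \<Longrightarrow> rnum n X = card {q \<in> Q. card (fibre q) = n}"
proof -
  assume n: "1 \<le> n"
  have "{q \<in> Q. card (fibre q) = n} \<subseteq> P1 \<times> P1" using Q_subset S_subset_P1 T_subset_P1 by auto
  then have "inj_on (\<lambda>(A, B). line_over A B) {q \<in> Q. card (fibre q) = n}"
    by (rule inj_on_subset[OF inj_on_line_over])
  then show ?thesis unfolding rnum_def Lines110_meeting_X[OF n] by (rule card_image)
qed

lemma sum_rnum_ge: "1 \<le> m \<Longrightarrow>
  (\<Sum>n | m \<le> n \<and> rnum n X \<noteq> 0. rnum n X) = card {q \<in> Q. m \<le> card (fibre q)}"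
proof -
  assume m: "1 \<le> m"
  have "{n. m \<le> n \<and> rnum n X \<noteq> 0} \<subseteq> {m..card X}"
  proof
    fix n assume "n \<in> {n. m \<le> n \<and> rnum n X \<noteq> 0}"
    then have n: "m \<le> n" "rnum n X \<noteq> 0" by auto
    have "rnum n X = card {q \<in> Q. card (fibre q) = n}" using m n(1) by (intro rnum_eq_card) simp
    then have "{q \<in> Q. card (fibre q) = n} \<noteq> {}" using n(2) by (metis card.empty)
    then obtain q where "card (fibre q) = n" by blast
    then show "n \<in> {m..card X}" using n card_fibre_le[of q] by auto
  qed
  then have "(\<Sum>n | m \<le> n \<and> rnum n X \<noteq> 0. rnum n X) = (\<Sum>n\<in>{m..card X}. rnum n X)"
    by (intro sum.mono_neutral_left) auto
  also have "\<dots> = (\<Sum>n\<in>{m..card X}. card {q \<in> Q. card (fibre q) = n})"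
    using m by (intro sum.cong refl rnum_eq_card) auto
  also have "\<dots> = card (\<Union>n\<in>{m..card X}. {q \<in> Q. card (fibre q) = n})"
    using finite_Q by (intro card_UN_disjoint[symmetric]) auto
  also have "(\<Union>n\<in>{m..card X}. {q \<in> Q. card (fibre q) = n}) = {q \<in> Q. m \<le> card (fibre q)}"
    using card_fibre_le by auto
  finally show ?thesis .
qed

lemma sum_sum_rnum: "(\<Sum>m = 1..k + 1. \<Sum>n | m \<le> n \<and> rnum n X \<noteq> 0. rnum n X)
  = (\<Sum>q\<in>Q. min (card (fibre q)) (Suc k))"
proof -
  have "(\<Sum>m = 1..k + 1. \<Sum>n | m \<le> n \<and> rnum n X \<noteq> 0. rnum n X)
      = (\<Sum>m = 1..k + 1. \<Sum>q\<in>Q. if m \<le> card (fibre q) then 1 else 0)"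
  proof (rule sum.cong[OF refl])
    fix m assume "m \<in> {1..k + 1}"
    then have "1 \<le> m" by simp
    then show "(\<Sum>n | m \<le> n \<and> rnum n X \<noteq> 0. rnum n X) = (\<Sum>q\<in>Q. if m \<le> card (fibre q) then 1 else 0)"
      by (simp only: sum_rnum_ge card_filter_eq_sum[OF finite_Q])
  qed
  also have "\<dots> = (\<Sum>q\<in>Q. \<Sum>m = 1..k + 1. if m \<le> card (fibre q) then 1 else 0)"
    by (rule sum.swap)
  also have "\<dots> = (\<Sum>q\<in>Q. min (card (fibre q)) (k + 1))"
    by (simp only: sum_le_indicator_eq_min)
  finally show ?thesis by (simp only: Suc_eq_plus1)
qed

end

theorem theorem3p4:
  fixes X :: "'a::field_char_0 pt3 set" and k :: nat
  assumes alg_closed: "\<forall>p :: 'a poly. degree p \<ge> 1 \<longrightarrow> (\<exists>x. poly p x = 0)"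
    and fin: "finite X"
    and pts: "X \<subseteq> P1cube"
  shows "HF X (card (fst ` X) - 1) (card ((fst \<circ> snd) ` X) - 1) k
       = (\<Sum>m = 1..k + 1. \<Sum>n | m \<le> n \<and> rnum n X \<noteq> 0. rnum n X)"
proof (cases "X = {}")
  case True
  have "IX X \<inter> Rdeg 0 0 k = Rdeg 0 0 k" unfolding IX_def True using Rdeg_subset_Rring by auto
  then have "HF X (card (fst ` X) - 1) (card ((fst \<circ> snd) ` X) - 1) k = 0"
    unfolding HF_def True by simp
  moreover have "(\<Sum>m = 1..k + 1. \<Sum>n | m \<le> n \<and> rnum n X \<noteq> 0. rnum n X) = 0"
  proof (rule sum.neutral, rule ballI)
    fix m :: nat assume "m \<in> {1..k + 1}"
    then have "{n. m \<le> n \<and> rnum n X \<noteq> 0} = {}" unfolding rnum_def True by auto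
    then show "(\<Sum>n | m \<le> n \<and> rnum n X \<noteq> 0. rnum n X) = 0" by (simp only: sum.empty)
  qed
  ultimately show ?thesis by (simp only:)
next
  case False
  then interpret finite_point_set X k using fin pts by unfold_locales
  show ?thesis by (simp only: HF_eq_sum_min sum_sum_rnum)
qed

end
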